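(* Consider a fair execution of Algorithm DLE from a permitted initial configuration $C_0$, and let $l$ be the point occupied by the elected leader when the algorithm terminates. When Algorithm DLE terminates, for every $i\in\{0,\dots,\epsilon_G(l)\}$ there exists a contracted particle occupying a point at grid distance $i$ from $l$; moreover, no particle occupies a point at grid distance greater than $\epsilon_G(l)$ from $l$.
   Context: Geometry. The triangular grid $G$ has as vertices ("points") the points of the regular triangular lattice in the plane, adjacent iff at unit distance; each point has six incident edges, cyclically ordered clockwise. The grid distance $dist_G(u,v)$ is the shortest-path distance in $G$. A shape is a finite set of points (identified with its induced subgraph). For a connected shape $S$: the unbounded face is the outer face; a bounded face containing a grid point not in $S$ is a hole; the area of $S$ is $S$ with its hole points; the outer boundary is the set of points of $S$ on the boundary of the outer face; a boundary point is a point of $S$ adjacent to a point not in $S$. For a boundary point $v$, a local boundary $B$ of $v$ w.r.t. $S$ is a maximal clockwise cyclic interval of consecutive edges at $v$ leading to points not in $S$, with boundary count $c(v,B)=|B|-2$. $v$ is redundant if its neighbors in $S$ induce a connected subgraph; erodable if redundant and on the outer boundary (it then has a single local boundary $B$); SCE if erodable and $c(v,B)>0$. Model (amoebot, strong scheduler). Anonymous constant-memory particles each occupy one point (contracted) or two adjacent points (expanded; head and tail); no point is occupied twice. Ports $0,\dots,5$, common clockwise chirality, particles know neighbors' port numbers for common edges, read/write neighbors' memories. Moves: expansion into an adjacent empty point (new head), contraction, handover. Executions are sequences of atomic activations of single particles (read, compute, write, at most one move); fair if every particle is activated infinitely often. Permitted initial configuration $C_0$: all particles contracted, nonempty connected set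 $S_P(C_0)$ of occupied points; each particle knows for each port whether the adjacent point lies in the outer face of $S_P(C_0)$. The system's shape may become disconnected. Algorithm DLE. Maintains eligible set $S_e$, initially the area of $S_P(C_0)$; points are only removed. Particle $p$ has $status$ (initially $undecided$) and $eligible[0..5]$ (initially true iff the adjacent point is not in the outer face of $S_P(C_0)$). On activation: if expanded, contract into head; else if $p$ and all neighbors are decided, terminate; else if undecided and contracted at $v$: if no neighbor of $v$ is in $S_e$ (per $eligible$), become $leader$; else if $v$ is SCE w.r.t. $S_e$, remove $v$ from $S_e$ (neighbors whose head is adjacent to $v$ update their $eligible$ entry for $v$ to false), then if $v$ has an adjacent unoccupied point $u\in S_e$, set own $eligible$ entries to true except the one pointing from $u$ to $v$ (false) and expand into $u$, otherwise become $follower$. In any fair execution $S_e$ eventually equals a single point $l$, occupied by the unique leader. $\epsilon_G(l)=\max_{u\in S_P(C_0)} dist_G(l,u)$ is the eccentricity of $l$ w.r.t. $G$ in $C_0$. *)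

theory Defs
  imports Main
begin

text \<open>Points of the triangular lattice in axial coordinates: (x,y) is embedded at
  x*(1,0) + y*(1/2, sqrt 3/2).  The six unit directions, listed in clockwise order.\<close>

type_synonym point = "int \<times> int"

definition dirvec :: "nat \<Rightarrow> int \<times> int" where
  "dirvec i = [(1,0), (1,-1), (0,-1), (-1,0), (-1,1), (0,1)] ! (i mod 6)"

definition nb :: "point \<Rightarrow> nat \<Rightarrow> point" where
  "nb v i = (fst v + fst (dirvec i), snd v + snd (dirvec i))"

definition gadj :: "point \<Rightarrow> point \<Rightarrow> bool" where
  "gadj u v \<longleftrightarrow> (\<exists>i<6. v = nb u i)"

definition gedges :: "(point \<times> point) set" where
  "gedges = {(u, v). gadj u v}"

definition gdist :: "point \<Rightarrow> point \<Rightarrow> nat" where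
  "gdist u v = (LEAST n. (u, v) \<in> gedges ^^ n)"

definition connected_set :: "point set \<Rightarrow> bool" where
  "connected_set A \<longleftrightarrow> (\<forall>a\<in>A. \<forall>b\<in>A. (a, b) \<in> (Restr gedges A)\<^sup>*)"

definition connected_shape :: "point set \<Rightarrow> bool" where
  "connected_shape S \<longleftrightarrow> finite S \<and> S \<noteq> {} \<and> connected_set S"

definition in_outer_face :: "point set \<Rightarrow> point \<Rightarrow> bool" where
  "in_outer_face S u \<longleftrightarrow> u \<notin> S \<and> infinite {w. (u, w) \<in> (Restr gedges (- S))\<^sup>*}"

definition area :: "point set \<Rightarrow> point set" where
  "area S = S \<union> {u. u \<notin> S \<and> \<not> in_outer_face S u}"

definition on_outer_boundary :: "point set \<Rightarrow> point \<Rightarrow> bool" where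
  "on_outer_boundary S v \<longleftrightarrow> v \<in> S \<and> (\<exists>u. gadj v u \<and> in_outer_face S u)"

text \<open>Local boundary: maximal clockwise cyclic interval of consecutive directions at v
  whose edges lead to points not in S (given as a set of directions in {0..5}).\<close>
definition local_boundary :: "point set \<Rightarrow> point \<Rightarrow> nat set \<Rightarrow> bool" where
  "local_boundary S v B \<longleftrightarrow> v \<in> S \<and>
     (\<exists>s k. s < 6 \<and> 1 \<le> k \<and> k \<le> 6 \<and> B = {(s + j) mod 6 | j. j < k} \<and>
        (\<forall>j<k. nb v ((s + j) mod 6) \<notin> S) \<and>
        (k < 6 \<longrightarrow> nb v ((s + 5) mod 6) \<in> S \<and> nb v ((s + k) mod 6) \<in> S))"

definition boundary_count :: "nat set \<Rightarrow> int" where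
  "boundary_count B = int (card B) - 2"

definition redundant :: "point set \<Rightarrow> point \<Rightarrow> bool" where
  "redundant S v \<longleftrightarrow> v \<in> S \<and> connected_set {u. gadj v u \<and> u \<in> S}"

definition erodable :: "point set \<Rightarrow> point \<Rightarrow> bool" where
  "erodable S v \<longleftrightarrow> redundant S v \<and> on_outer_boundary S v"

definition SCE :: "point set \<Rightarrow> point \<Rightarrow> bool" where
  "SCE S v \<longleftrightarrow> erodable S v \<and> (\<exists>B. local_boundary S v B \<and> boundary_count B > 0)"

datatype loc = Contr point | Exp point point  \<comment> \<open>Exp head tail\<close>

datatype pstatus = Undecided | Leader | Follower

fun occ_pts :: "loc \<Rightarrow> point set" where
  "occ_pts (Contr v) = {v}"
| "occ_pts (Exp h t) = {h, t}"

record 'p conf =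
  pos :: "'p \<Rightarrow> loc"
  stat :: "'p \<Rightarrow> pstatus"
  terminated :: "'p \<Rightarrow> bool"
  elig :: "point set"

definition occupied :: "'p set \<Rightarrow> ('p, 'b) conf_scheme \<Rightarrow> point set" where
  "occupied P C = (\<Union>p\<in>P. occ_pts (pos C p))"

definition nbr_particles :: "'p set \<Rightarrow> ('p, 'b) conf_scheme \<Rightarrow> 'p \<Rightarrow> point \<Rightarrow> 'p set" where
  "nbr_particles P C p v = {q \<in> P. q \<noteq> p \<and> (\<exists>w \<in> occ_pts (pos C q). gadj v w)}"

inductive dle_step :: "'p set \<Rightarrow> 'p \<Rightarrow> 'p conf \<Rightarrow> 'p conf \<Rightarrow> bool" for P where
  idle_terminated:
    "terminated C p \<Longrightarrow> dle_step P p C C"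
| contract:
    "\<not> terminated C p \<Longrightarrow> pos C p = Exp h t \<Longrightarrow>
     dle_step P p C (C\<lparr>pos := (pos C)(p := Contr h)\<rparr>)"
| terminate:
    "\<not> terminated C p \<Longrightarrow> pos C p = Contr v \<Longrightarrow> stat C p \<noteq> Undecided \<Longrightarrow>
     (\<forall>q \<in> nbr_particles P C p v. stat C q \<noteq> Undecided) \<Longrightarrow>
     dle_step P p C (C\<lparr>terminated := (terminated C)(p := True)\<rparr>)"
| wait_decided:
    "\<not> terminated C p \<Longrightarrow> pos C p = Contr v \<Longrightarrow> stat C p \<noteq> Undecided \<Longrightarrow>
     (\<exists>q \<in> nbr_particles P C p v. stat C q = Undecided) \<Longrightarrow>
     dle_step P p C C"
| become_leader:
    "\<not> terminated C p \<Longrightarrow> pos C p = Contr v \<Longrightarrow> stat C p = Undecided \<Longrightarrow>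
     (\<forall>u. gadj v u \<longrightarrow> u \<notin> elig C) \<Longrightarrow>
     dle_step P p C (C\<lparr>stat := (stat C)(p := Leader)\<rparr>)"
| erode_expand:
    "\<not> terminated C p \<Longrightarrow> pos C p = Contr v \<Longrightarrow> stat C p = Undecided \<Longrightarrow>
     (\<exists>u. gadj v u \<and> u \<in> elig C) \<Longrightarrow> SCE (elig C) v \<Longrightarrow>
     gadj v u \<Longrightarrow> u \<notin> occupied P C \<Longrightarrow> u \<in> elig C - {v} \<Longrightarrow>
     dle_step P p C (C\<lparr>pos := (pos C)(p := Exp u v), elig := elig C - {v}\<rparr>)"
| erode_follower:
    "\<not> terminated C p \<Longrightarrow> pos C p = Contr v \<Longrightarrow> stat C p = Undecided \<Longrightarrow>
     (\<exists>u. gadj v u \<and> u \<in> elig C) \<Longrightarrow> SCE (elig C) v \<Longrightarrow>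
     \<not> (\<exists>u. gadj v u \<and> u \<notin> occupied P C \<and> u \<in> elig C - {v}) \<Longrightarrow>
     dle_step P p C (C\<lparr>stat := (stat C)(p := Follower), elig := elig C - {v}\<rparr>)"
| wait_undecided:
    "\<not> terminated C p \<Longrightarrow> pos C p = Contr v \<Longrightarrow> stat C p = Undecided \<Longrightarrow>
     (\<exists>u. gadj v u \<and> u \<in> elig C) \<Longrightarrow> \<not> SCE (elig C) v \<Longrightarrow>
     dle_step P p C C"

definition permitted_init :: "'p set \<Rightarrow> 'p conf \<Rightarrow> bool" where
  "permitted_init P C0 \<longleftrightarrow>
     finite P \<and> P \<noteq> {} \<and>
     (\<forall>p\<in>P. \<exists>v. pos C0 p = Contr v) \<and>
     inj_on (pos C0) P \<and>
     connected_shape (occupied P C0) \<and>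
     (\<forall>p\<in>P. stat C0 p = Undecided \<and> \<not> terminated C0 p) \<and>
     elig C0 = area (occupied P C0)"

definition fair_execution :: "'p set \<Rightarrow> (nat \<Rightarrow> 'p conf) \<Rightarrow> (nat \<Rightarrow> 'p) \<Rightarrow> bool" where
  "fair_execution P C act \<longleftrightarrow>
     (\<forall>i. act i \<in> P \<and> dle_step P (act i) (C i) (C (Suc i))) \<and>
     (\<forall>p\<in>P. \<forall>i. \<exists>j\<ge>i. act j = p)"

definition eccentricity :: "point set \<Rightarrow> point \<Rightarrow> nat" where
  "eccentricity S0 l = Max ((\<lambda>u. gdist l u) ` S0)"

end

theory Submission
  imports Defs
begin

text \<open>
  Along every execution DLE maintains, besides bookkeeping facts, two geometric invariants
  relative to the set X of eligible occupied points: every eligible point outside X lies in a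
  finite component of the complement of X, and for every eligible point z the grid distances
  from z to the particle heads take every value between their minimum and the eccentricity of
  z in the initial shape. Initially both hold because the heads form the connected initial
  shape. Only an expansion from an SCE point v to a free eligible neighbour u moves a head, and
  if v was the only head at its distance from z then u is at the same distance: otherwise the
  ring around z through v would connect an enclosed free point to the outer face, which the
  three consecutive free directions at v forbid. At termination every particle is contracted
  and the leader's point l is an eligible head at distance 0 from itself, so every distance up
  to the eccentricity of l is realised; and no particle ever leaves the area of the initial
  shape, which lies within that eccentricity of l.
\<close>

declare split_paired_All [simp del] split_paired_Ex [simp del]

section \<open>Directions and adjacency\<close>

lemma less_6_cases:
  fixes r :: nat
  assumes "r < 6"
  obtains "r = 0" | "r = 1" | "r = 2" | "r = 3" | "r = 4" | "r = 5"
  using assms by linarith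

lemma ex_less_6: "(\<exists>k::nat<6. P k) \<longleftrightarrow> P 0 \<or> P 1 \<or> P 2 \<or> P 3 \<or> P 4 \<or> P 5"
  by (auto elim: less_6_cases) (use zero_less_numeral in \<open>force+\<close>)

lemma nat_mod_eq_iff_int_dvd: "(x::nat) mod m = y mod m \<longleftrightarrow> int m dvd int x - int y"
  by (metis mod_eq_dvd_iff of_nat_eq_iff of_nat_mod)

lemma dirvec_mod6 [simp]: "dirvec (k mod 6) = dirvec k"
  by (simp add: dirvec_def)

lemma dirvec_add_mod6: "dirvec (k + c) = dirvec (k mod 6 + c)"
  by (simp add: dirvec_def mod_add_left_eq)

lemma dirvec_eq_iff: "dirvec a = dirvec b \<longleftrightarrow> a mod 6 = b mod 6"
proof -
  have "dirvec (a mod 6) = dirvec (b mod 6) \<longleftrightarrow> a mod 6 = b mod 6"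
    by (cases rule: less_6_cases[of "a mod 6"]; cases rule: less_6_cases[of "b mod 6"])
      (simp_all add: dirvec_def)
  then show ?thesis by simp
qed

lemma dirvec_opposite: "dirvec (k + 3) = (- fst (dirvec k), - snd (dirvec k))"
  unfolding dirvec_add_mod6[of k] dirvec_mod6[of k, symmetric]
  by (cases rule: less_6_cases[of "k mod 6"]) (simp_all add: dirvec_def)

lemma dirvec_Suc:
  "dirvec (k + 1) = (fst (dirvec k) + fst (dirvec (k + 2)), snd (dirvec k) + snd (dirvec (k + 2)))"
  unfolding dirvec_add_mod6[of k] dirvec_mod6[of k, symmetric]
  by (cases rule: less_6_cases[of "k mod 6"]) (simp_all add: dirvec_def)

lemma dirvec_nonzero: "dirvec k \<noteq> (0, 0)"
  unfolding dirvec_def by (cases rule: less_6_cases[of "k mod 6"]) simp_all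

lemma nb_mod6 [simp]: "nb v (k mod 6) = nb v k"
  by (simp add: nb_def)

lemma nb_eq_iff: "nb v a = nb v b \<longleftrightarrow> a mod 6 = b mod 6"
  by (simp add: nb_def prod_eq_iff dirvec_eq_iff[symmetric])

lemma nb_add_cong: "nb v a = nb v b \<Longrightarrow> nb v (a + c) = nb v (b + c)"
  unfolding nb_eq_iff by (rule mod_add_cong) simp_all

lemma mod6_offset: "((s::nat) + (k + 6 - s mod 6) mod 6) mod 6 = k mod 6"
proof -
  have "(s + (k + 6 - s mod 6) mod 6) mod 6 = (s mod 6 + (k + 6 - s mod 6)) mod 6"
    by (metis mod_add_left_eq mod_add_right_eq)
  also have "s mod 6 + (k + 6 - s mod 6) = k + 6" by (simp add: less_imp_le_nat)
  finally show ?thesis by simp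
qed

lemma nb_relative:
  obtains t where "t < 6" "nb v k = nb v (s + t)"
proof
  show "nb v k = nb v (s + (k + 6 - s mod 6) mod 6)" unfolding nb_eq_iff mod6_offset ..
qed simp

lemma nb_opposite: "nb (nb u k) (k + 3) = u"
  by (simp add: nb_def dirvec_opposite)

lemma nb_Suc: "nb v (Suc k) = nb (nb v k) (k + 2)"
  using dirvec_Suc[of k] by (simp add: nb_def algebra_simps)

lemma gadj_nb: "gadj u (nb u k)"
  unfolding gadj_def by (metis nb_mod6 mod_less_divisor zero_less_numeral)

lemma gadj_sym: "gadj u v \<Longrightarrow> gadj v u"
  by (metis gadj_def gadj_nb nb_opposite)

lemma gadj_irrefl: "\<not> gadj u u"
  using dirvec_nonzero by (auto simp: gadj_def nb_def prod_eq_iff)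

lemma nb_neq [simp]: "nb v k \<noteq> v"
  using gadj_nb[of v k] gadj_irrefl by metis

lemma gadj_nb_Suc: "gadj (nb v k) (nb v (Suc k))"
  unfolding nb_Suc by (rule gadj_nb)

lemma gadj_nb_nb: "b = a + 1 \<Longrightarrow> gadj (nb v (s + a)) (nb v (s + b))"
  using gadj_nb_Suc[of v "s + a"] by simp

lemma gadj_nb_relative:
  assumes "gadj v u"
  obtains t where "t < 6" "u = nb v (s + t)"
proof -
  obtain k where "u = nb v k" using assms unfolding gadj_def by blast
  with nb_relative[of v k s] that show ?thesis by metis
qed

lemma gadj_nbs: "gadj (nb v a) (nb v b) \<Longrightarrow> nb v b = nb v (a + 1) \<or> nb v a = nb v (b + 1)"
proof -
  assume "gadj (nb v a) (nb v b)"
  then obtain c where "nb v b = nb (nb v a) c" unfolding gadj_def by blast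
  then have "dirvec (c mod 6) = (fst (dirvec b) - fst (dirvec a), snd (dirvec b) - snd (dirvec a))"
    by (simp add: nb_def prod_eq_iff)
  then have "\<exists>c<6. dirvec c = (fst (dirvec (b mod 6)) - fst (dirvec (a mod 6)),
                              snd (dirvec (b mod 6)) - snd (dirvec (a mod 6)))"
    by (metis dirvec_mod6 mod_less_divisor zero_less_numeral)
  moreover have "a mod 6 = 0 \<or> a mod 6 = 1 \<or> a mod 6 = 2 \<or> a mod 6 = 3 \<or> a mod 6 = 4 \<or> a mod 6 = 5"
    "b mod 6 = 0 \<or> b mod 6 = 1 \<or> b mod 6 = 2 \<or> b mod 6 = 3 \<or> b mod 6 = 4 \<or> b mod 6 = 5"
    by linarith+
  ultimately have "b mod 6 = (a mod 6 + 1) mod 6 \<or> a mod 6 = (b mod 6 + 1) mod 6"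
    unfolding ex_less_6 by (elim disjE; simp add: dirvec_def)
  then show ?thesis unfolding nb_eq_iff by presburger
qed

lemma gadj_nb_shift:
  assumes "gadj (nb v (k + t)) y" "gadj v y" "t \<ge> 1"
  shows "y = nb v (k + (t + 1)) \<or> y = nb v (k + (t - 1))"
proof -
  obtain m where y: "y = nb v m" using assms(2) unfolding gadj_def by blast
  then have "nb v m = nb v (k + t + 1) \<or> nb v (k + t) = nb v (m + 1)"
    using gadj_nbs[of v "k + t" m] assms(1) by simp
  then show ?thesis unfolding y nb_eq_iff nat_mod_eq_iff_int_dvd using assms(3) by presburger
qed

lemma finite_gadj: "finite {y. gadj v y}"
proof -
  have "{y. gadj v y} = nb v ` {..<6}" unfolding gadj_def by auto
  then show ?thesis by simp
qed

section \<open>Components of induced subgraphs\<close>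

lemma sym_gedges: "sym gedges"
  unfolding sym_def gedges_def by (auto intro: gadj_sym)

lemma rtrancl_Restr_gedges_sym: "(a, b) \<in> (Restr gedges A)\<^sup>* \<Longrightarrow> (b, a) \<in> (Restr gedges A)\<^sup>*"
proof -
  have "sym (Restr gedges A)" using sym_gedges unfolding sym_def by blast
  then show "(a, b) \<in> (Restr gedges A)\<^sup>* \<Longrightarrow> (b, a) \<in> (Restr gedges A)\<^sup>*"
    by (rule symD[OF sym_rtrancl])
qed

lemma rtrancl_Restr_mono: "A \<subseteq> B \<Longrightarrow> (a, b) \<in> (Restr r A)\<^sup>* \<Longrightarrow> (a, b) \<in> (Restr r B)\<^sup>*"
  by (metis Int_mono Sigma_mono order_refl rtrancl_mono subsetD)

text \<open>The component of \<open>x\<close> in the subgraph induced by \<open>A\<close>; it contains \<open>x\<close> even if \<open>x \<notin> A\<close>.\<close>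

definition reach :: "point set \<Rightarrow> point \<Rightarrow> point set" where
  "reach A x = {y. (x, y) \<in> (Restr gedges A)\<^sup>*}"

lemma in_outer_face_iff_reach: "in_outer_face S u \<longleftrightarrow> u \<notin> S \<and> infinite (reach (- S) u)"
  unfolding in_outer_face_def reach_def by simp

lemma reach_refl: "x \<in> reach A x"
  unfolding reach_def by simp

lemma reach_mono: "A \<subseteq> B \<Longrightarrow> reach A x \<subseteq> reach B x"
  unfolding reach_def using rtrancl_Restr_mono[of A B x] by auto

lemma reach_trans: "y \<in> reach A x \<Longrightarrow> reach A y \<subseteq> reach A x"
  unfolding reach_def by (auto intro: rtrancl_trans)

lemma reach_sym: "y \<in> reach A x \<Longrightarrow> x \<in> reach A y"
  unfolding reach_def by (auto intro: rtrancl_Restr_gedges_sym)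

lemma reach_step: "y \<in> reach A x \<Longrightarrow> y \<in> A \<Longrightarrow> gadj y y' \<Longrightarrow> y' \<in> A \<Longrightarrow> y' \<in> reach A x"
  unfolding reach_def by (auto intro: rtrancl_into_rtrancl simp: gedges_def)

lemma reach_subset: "y \<in> reach A x \<Longrightarrow> x \<in> A \<Longrightarrow> y \<in> A"
  unfolding reach_def by (auto elim: rtranclE)

lemma finite_reach_trans: "y \<in> reach A x \<Longrightarrow> finite (reach A x) \<Longrightarrow> finite (reach A y)"
  using reach_trans finite_subset by metis

lemma outer_face_not_in_enclosed:
  assumes "in_outer_face S y" "X \<subseteq> S" "finite (reach (- X) w)"
  shows "y \<notin> reach (- X) w"
proof
  assume "y \<in> reach (- X) w"
  then have "reach (- X) y \<subseteq> reach (- X) w" by (rule reach_trans)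
  moreover have "reach (- S) y \<subseteq> reach (- X) y" using assms(2) by (intro reach_mono) auto
  ultimately have "finite (reach (- S) y)" using assms(3) by (meson finite_subset subset_trans)
  then show False using assms(1) unfolding in_outer_face_iff_reach by simp
qed

lemma rtrancl_Restr_reach:
  "(x, y) \<in> (Restr gedges A)\<^sup>* \<Longrightarrow> (x, y) \<in> (Restr gedges (reach A x))\<^sup>*"
proof (induction rule: rtrancl_induct)
  case (step y y')
  then have "y \<in> reach A x" "y' \<in> reach A x"
    unfolding reach_def by (auto intro: rtrancl_into_rtrancl)
  with step show ?case by (auto intro: rtrancl_into_rtrancl)
qed simp

lemma nb_arc_path:
  assumes "\<forall>t. t1 \<le> t \<and> t \<le> t2 \<longrightarrow> nb v (k + t) \<in> A" "t1 \<le> t2"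
  shows "(nb v (k + t1), nb v (k + t2)) \<in> (Restr gedges A)\<^sup>*"
  using assms
proof (induction t2)
  case (Suc t2)
  show ?case
  proof (cases "t1 = Suc t2")
    case False
    then have "t1 \<le> t2" using Suc by simp
    then have "(nb v (k + t1), nb v (k + t2)) \<in> (Restr gedges A)\<^sup>*" using Suc by auto
    moreover have "nb v (k + t2) \<in> A" "nb v (k + Suc t2) \<in> A"
      using Suc.prems(1) \<open>t1 \<le> t2\<close> by (auto simp del: add_Suc_right)
    ultimately show ?thesis
      using gadj_nb_Suc[of v "k + t2"] by (simp add: gedges_def rtrancl_into_rtrancl)
  qed simp
qed simp

lemma reach_add_point_avoided:
  assumes B: "B \<subseteq> A \<union> {v}" and w: "w \<in> A"
    and avoid: "\<And>y. gadj v y \<Longrightarrow> y \<in> B \<Longrightarrow> y \<notin> reach A w"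
  shows "reach B w \<subseteq> reach A w"
proof
  fix x assume "x \<in> reach B w"
  then have "(w, x) \<in> (Restr gedges B)\<^sup>*" unfolding reach_def by simp
  then show "x \<in> reach A w"
  proof (induction rule: rtrancl_induct)
    case base show ?case by (rule reach_refl)
  next
    case (step x x')
    then have xx': "gadj x x'" "x \<in> B" "x' \<in> B" by (auto simp: gedges_def)
    have "x' \<noteq> v" using avoid[of x] xx' step.IH gadj_sym by blast
    then have "x' \<in> A" using xx' B by auto
    moreover have "x \<in> A" using reach_subset[OF step.IH w] .
    ultimately show ?case using reach_step[OF step.IH _ xx'(1)] by blast
  qed
qed

lemma reach_add_point:
  assumes B: "B \<subseteq> A \<union> {v}" and w: "w \<in> A"
  shows "reach B w \<subseteq> reach A w \<union> {v} \<union> (\<Union>y\<in>{y. gadj v y \<and> y \<in> B - {v}}. reach A y)"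
    (is "_ \<subseteq> ?U")
proof
  fix x assume "x \<in> reach B w"
  then have "(w, x) \<in> (Restr gedges B)\<^sup>*" unfolding reach_def by simp
  then show "x \<in> ?U"
  proof (induction rule: rtrancl_induct)
    case base show ?case using reach_refl by blast
  next
    case (step x x')
    then have xx': "gadj x x'" "x \<in> B" "x' \<in> B" by (auto simp: gedges_def)
    consider "x' = v" | "x = v" "x' \<noteq> v" | "x \<noteq> v" "x' \<noteq> v" by blast
    then show ?case
    proof cases
      case 2
      then show ?thesis using xx' reach_refl by blast
    next
      case 3
      then have A: "x \<in> A" "x' \<in> A" using xx' B by auto
      from step.IH 3 consider "x \<in> reach A w" | y where "gadj v y" "y \<in> B - {v}" "x \<in> reach A y"
        by blast
      then show ?thesis
      proof cases
        case 1 then show ?thesis using reach_step[OF _ A(1) xx'(1) A(2)] by blast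
      next
        case 2 then show ?thesis using reach_step[OF 2(3) A(1) xx'(1) A(2)] by blast
      qed
    qed simp
  qed
qed

section \<open>Grid distance\<close>

text \<open>In the axial coordinates of \<^const>\<open>dirvec\<close>, grid distance is the hexagonal norm.\<close>

definition hex_norm :: "int \<Rightarrow> int \<Rightarrow> int" where
  "hex_norm a b = max \<bar>a\<bar> (max \<bar>b\<bar> \<bar>a + b\<bar>)"

definition hex_dist :: "point \<Rightarrow> point \<Rightarrow> nat" where
  "hex_dist u v = nat (hex_norm (fst v - fst u) (snd v - snd u))"

lemma hex_norm_nonneg: "hex_norm a b \<ge> 0"
  by (simp add: hex_norm_def)

lemma of_nat_hex_dist: "int (hex_dist u v) = hex_norm (fst v - fst u) (snd v - snd u)"
  by (simp add: hex_dist_def hex_norm_nonneg)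

lemma of_nat_hex_dist_nb:
  "int (hex_dist z (nb v k)) = hex_norm (fst v - fst z + fst (dirvec k)) (snd v - snd z + snd (dirvec k))"
  by (simp add: of_nat_hex_dist nb_def algebra_simps)

lemma hex_dist_eq_0_iff [simp]: "hex_dist u v = 0 \<longleftrightarrow> u = v"
  unfolding hex_dist_def hex_norm_def by (auto simp: prod_eq_iff)

lemma hex_dist_self [simp]: "hex_dist u u = 0"
  by simp

lemma hex_norm_dirvec_step:
  "hex_norm (a + fst (dirvec k)) (b + snd (dirvec k)) \<le> hex_norm a b + 1"
  unfolding dirvec_def hex_norm_def by (cases rule: less_6_cases[of "k mod 6"]) auto

lemma hex_dist_gadj: "gadj u v \<Longrightarrow> hex_dist z v \<le> hex_dist z u + 1"
proof -
  assume "gadj u v"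
  then obtain k where v: "v = nb u k" by (auto simp: gadj_def)
  have "int (hex_dist z v) \<le> int (hex_dist z u) + 1"
    unfolding v of_nat_hex_dist_nb unfolding of_nat_hex_dist by (rule hex_norm_dirvec_step)
  then show ?thesis by linarith
qed

lemma hex_norm_sphere_cases:
  fixes a b r :: int
  assumes "hex_norm a b = r" "r \<ge> 1"
  shows "(a = r \<and> -r < b \<and> b \<le> 0) \<or> (b = -r \<and> 0 < a \<and> a \<le> r) \<or>
         (a + b = -r \<and> -r < a \<and> a \<le> 0) \<or> (a = -r \<and> 0 \<le> b \<and> b < r) \<or>
         (b = r \<and> -r \<le> a \<and> a < 0) \<or> (a + b = r \<and> 0 \<le> a \<and> a < r)"
  using assms unfolding hex_norm_def by smt

lemma hex_norm_step_closer:
  assumes "hex_norm a b \<ge> 1"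
  shows "\<exists>k<6. hex_norm (a - fst (dirvec k)) (b - snd (dirvec k)) = hex_norm a b - 1"
  using hex_norm_sphere_cases[OF refl assms] unfolding ex_less_6
  by (elim disjE) (simp_all add: dirvec_def hex_norm_def)

lemma hex_dist_le_relpow: "(u, v) \<in> gedges ^^ n \<Longrightarrow> hex_dist u v \<le> n"
proof (induction n arbitrary: v)
  case (Suc n)
  then obtain w where "(u, w) \<in> gedges ^^ n" "gadj w v" by (auto simp: gedges_def)
  then show ?case using Suc.IH[of w] hex_dist_gadj[of w v u] by simp
qed simp

lemma relpow_hex_dist: "(u, v) \<in> gedges ^^ hex_dist u v"
proof (induction "hex_dist u v" arbitrary: u)
  case (Suc n)
  have "hex_norm (fst v - fst u) (snd v - snd u) = int n + 1"
    using Suc.hyps(2) of_nat_hex_dist[of u v] by simp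
  then obtain k where
    "hex_norm (fst v - fst u - fst (dirvec k)) (snd v - snd u - snd (dirvec k)) = int n"
    using hex_norm_step_closer[of "fst v - fst u" "snd v - snd u"] by auto
  then have k: "hex_dist (nb u k) v = n" unfolding hex_dist_def nb_def by (simp add: algebra_simps)
  then have "(nb u k, v) \<in> gedges ^^ n" using Suc.hyps(1)[of "nb u k"] by simp
  moreover have "(u, nb u k) \<in> gedges" by (simp add: gedges_def gadj_nb)
  ultimately show ?case unfolding Suc.hyps(2)[symmetric] by (rule relpow_Suc_I2[rotated])
qed simp

lemma gdist_eq_hex_dist: "gdist u v = hex_dist u v"
  unfolding gdist_def by (rule Least_equality) (auto simp: relpow_hex_dist hex_dist_le_relpow)

lemma path_attains_dist:
  assumes "(a, b) \<in> (Restr gedges S)\<^sup>*" "a \<in> S" "hex_dist z a \<le> i" "i \<le> hex_dist z b"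
  shows "\<exists>x\<in>S. hex_dist z x = i"
  using assms
proof (induction arbitrary: i rule: rtrancl_induct)
  case base then show ?case by (auto intro: le_antisym)
next
  case (step b c)
  then have c: "gadj b c" "c \<in> S" by (auto simp: gedges_def)
  show ?case
  proof (cases "i \<le> hex_dist z b")
    case True then show ?thesis using step by blast
  next
    case False
    then have "i = hex_dist z c" using hex_dist_gadj[OF c(1), of z] step.prems by linarith
    then show ?thesis using c(2) by blast
  qed
qed

lemma connected_set_dists_gapless:
  assumes S: "finite S" "S \<noteq> {}" "connected_set S"
    and x: "x \<in> S" "hex_dist z x \<le> i" and i: "i \<le> eccentricity S z"
  shows "\<exists>x\<in>S. hex_dist z x = i"
proof -
  have "Max ((\<lambda>u. hex_dist z u) ` S) \<in> (\<lambda>u. hex_dist z u) ` S" using S(1,2) by simp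
  then obtain y where y: "y \<in> S" "hex_dist z y = eccentricity S z"
    unfolding eccentricity_def gdist_eq_hex_dist by auto
  moreover have "(x, y) \<in> (Restr gedges S)\<^sup>*" using S(3) x(1) y(1) unfolding connected_set_def by blast
  ultimately show ?thesis using path_attains_dist[of x y S z i] x i by simp
qed

section \<open>Rings\<close>

text \<open>
  The ring of radius \<open>i\<close> around \<open>z\<close> as a closed walk of length \<open>6 * i\<close>: its
  \<open>n\<close>-th point lies on side \<open>n div i\<close>, which starts at the corner
  \<open>z + i * dirvec (n div i)\<close> and runs in direction \<open>n div i + 2\<close>.
\<close>

definition ring_point :: "point \<Rightarrow> nat \<Rightarrow> nat \<Rightarrow> point" where
  "ring_point z i n =
     (fst z + int i * fst (dirvec (n div i)) + int (n mod i) * fst (dirvec (n div i + 2)),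
      snd z + int i * snd (dirvec (n div i)) + int (n mod i) * snd (dirvec (n div i + 2)))"

lemma ring_point_Suc:
  assumes "i \<ge> 1"
  shows "ring_point z i (Suc n) = nb (ring_point z i n) (n div i + 2)"
proof (cases "Suc (n mod i) = i")
  case True
  then have d: "Suc n div i = n div i + 1" "Suc n mod i = 0"
    using assms by (auto simp: div_Suc mod_Suc)
  have j: "int (n mod i) = int i - 1" using True by linarith
  show ?thesis
    unfolding ring_point_def nb_def d j dirvec_Suc by (simp add: algebra_simps)
next
  case False
  then have "Suc n div i = n div i" "Suc n mod i = Suc (n mod i)"
    using assms by (auto simp: div_Suc mod_Suc)
  then show ?thesis unfolding ring_point_def nb_def by (simp add: algebra_simps)
qed

lemma ring_point_periodic:
  assumes "i \<ge> 1"
  shows "ring_point z i (n + 6 * i) = ring_point z i n"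
proof -
  have d: "(n + 6 * i) div i = n div i + 6" "(n + 6 * i) mod i = n mod i" using assms by simp_all
  have "dirvec (n div i + 6 + c) = dirvec (n div i + c)" for c
    using dirvec_add_mod6[of "n div i + 6" c] dirvec_add_mod6[of "n div i" c] by simp
  from this[of 0] this[of 2] show ?thesis unfolding ring_point_def d by simp
qed

lemma hex_dist_ring_point:
  assumes "i \<ge> 1"
  shows "hex_dist z (ring_point z i n) = i"
proof -
  define s where "s = n div i"
  have j: "n mod i < i" using assms by simp
  have "int (hex_dist z (ring_point z i n)) =
      hex_norm (int i * fst (dirvec (s mod 6)) + int (n mod i) * fst (dirvec (s mod 6 + 2)))
               (int i * snd (dirvec (s mod 6)) + int (n mod i) * snd (dirvec (s mod 6 + 2)))"
    unfolding of_nat_hex_dist ring_point_def s_def[symmetric] dirvec_add_mod6[of s] by simp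
  also have "\<dots> = int i"
    by (cases rule: less_6_cases[of "s mod 6"]) (use j in \<open>simp_all add: dirvec_def hex_norm_def\<close>)
  finally show ?thesis by simp
qed

lemma ring_point_decomp:
  assumes "j < i" "s < 6"
  shows "ring_point z i (s * i + j) =
    (fst z + int i * fst (dirvec s) + int j * fst (dirvec (s + 2)),
     snd z + int i * snd (dirvec s) + int j * snd (dirvec (s + 2)))"
proof -
  have "(s * i + j) div i = s" "(s * i + j) mod i = j" using assms by auto
  then show ?thesis unfolding ring_point_def by simp
qed

lemma hex_norm_sphere_param:
  assumes "hex_norm a b = int r" "r \<ge> 1"
  obtains s j where "s < 6" "j < r"
    "a = int r * fst (dirvec s) + int j * fst (dirvec (s + 2))"
    "b = int r * snd (dirvec s) + int j * snd (dirvec (s + 2))"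
proof -
  have "int r \<ge> 1" using assms(2) by simp
  from hex_norm_sphere_cases[OF assms(1) this] show ?thesis
  proof (elim disjE)
    assume "a = int r \<and> - int r < b \<and> b \<le> 0"
    then show ?thesis by (intro that[of 0 "nat (- b)"]) (simp_all add: dirvec_def nat_less_iff)
  next
    assume "b = - int r \<and> 0 < a \<and> a \<le> int r"
    then show ?thesis by (intro that[of 1 "nat (int r - a)"]) (simp_all add: dirvec_def nat_less_iff)
  next
    assume "a + b = - int r \<and> - int r < a \<and> a \<le> 0"
    then show ?thesis by (intro that[of 2 "nat (- a)"]) (simp_all add: dirvec_def nat_less_iff)
  next
    assume "a = - int r \<and> 0 \<le> b \<and> b < int r"
    then show ?thesis by (intro that[of 3 "nat b"]) (simp_all add: dirvec_def nat_less_iff)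
  next
    assume "b = int r \<and> - int r \<le> a \<and> a < 0"
    then show ?thesis by (intro that[of 4 "nat (a + int r)"]) (simp_all add: dirvec_def nat_less_iff)
  next
    assume "a + b = int r \<and> 0 \<le> a \<and> a < int r"
    then show ?thesis by (intro that[of 5 "nat a"]) (simp_all add: dirvec_def nat_less_iff)
  qed
qed

lemma ring_point_surj:
  assumes "i \<ge> 1" "hex_dist z x = i"
  obtains n where "n < 6 * i" "ring_point z i n = x"
proof -
  have "hex_norm (fst x - fst z) (snd x - snd z) = int i"
    using assms(2) of_nat_hex_dist[of z x] by simp
  then obtain s j where sj: "s < 6" "j < i"
    "fst x - fst z = int i * fst (dirvec s) + int j * fst (dirvec (s + 2))"
    "snd x - snd z = int i * snd (dirvec s) + int j * snd (dirvec (s + 2))"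
    using assms(1) by (rule hex_norm_sphere_param)
  have "s * i + j < 6 * i"
  proof -
    have "s * i + j < (s + 1) * i" using sj(2) by simp
    also have "\<dots> \<le> 6 * i" using sj(1) by (intro mult_right_mono) auto
    finally show ?thesis .
  qed
  moreover have "ring_point z i (s * i + j) = x"
    using sj(3,4) unfolding ring_point_decomp[OF sj(2,1)] by (simp add: prod_eq_iff)
  ultimately show ?thesis by (rule that)
qed

lemma ring_coords_inj:
  assumes "A < 6" "B < 6" "ja < i" "jb < i"
    "int i * fst (dirvec A) + int ja * fst (dirvec (A + 2)) =
     int i * fst (dirvec B) + int jb * fst (dirvec (B + 2))"
    "int i * snd (dirvec A) + int ja * snd (dirvec (A + 2)) =
     int i * snd (dirvec B) + int jb * snd (dirvec (B + 2))"
  shows "A = B \<and> ja = jb"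
proof -
  have "A = 0 \<or> A = 1 \<or> A = 2 \<or> A = 3 \<or> A = 4 \<or> A = 5"
    "B = 0 \<or> B = 1 \<or> B = 2 \<or> B = 3 \<or> B = 4 \<or> B = 5"
    using assms(1,2) by linarith+
  with assms(3-6) show ?thesis by (elim disjE; simp add: dirvec_def; arith?)
qed

lemma ring_point_inj:
  assumes "i \<ge> 1" "m < 6 * i" "n < 6 * i" "ring_point z i m = ring_point z i n"
  shows "m = n"
proof -
  have s: "m div i < 6" "n div i < 6" using assms by (simp_all add: div_less_iff_less_mult)
  have j: "m mod i < i" "n mod i < i" using assms by simp_all
  have "m div i = n div i \<and> m mod i = n mod i"
    using ring_coords_inj[OF s j] assms(4) unfolding ring_point_def by simp
  then show ?thesis by (metis div_mult_mod_eq)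
qed

lemma ring_point_walk:
  assumes "i \<ge> 1" "\<forall>t\<le>k. ring_point z i (m + t) \<in> A"
  shows "(ring_point z i m, ring_point z i (m + k)) \<in> (Restr gedges A)\<^sup>*"
  using assms(2)
proof (induction k)
  case (Suc k)
  then have "(ring_point z i m, ring_point z i (m + k)) \<in> (Restr gedges A)\<^sup>*" by simp
  moreover have "(ring_point z i (m + k), ring_point z i (m + Suc k)) \<in> Restr gedges A"
  proof -
    have "ring_point z i (m + k) \<in> A" "ring_point z i (m + Suc k) \<in> A" using Suc.prems by auto
    moreover have "gadj (ring_point z i (m + k)) (ring_point z i (m + Suc k))"
      using ring_point_Suc[OF assms(1), of z "m + k"] by (simp add: gadj_nb)
    ultimately show ?thesis by (simp add: gedges_def)
  qed
  ultimately show ?case by (rule rtrancl_into_rtrancl)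
qed simp

lemma ring_arc_avoiding:
  assumes i: "i \<ge> 1" and pq: "p \<le> q" "q < 6 * i"
    and nv: "nv < 6 * i" "nv \<noteq> p" "nv \<noteq> q"
  shows "(ring_point z i p, ring_point z i q)
           \<in> (Restr gedges ({y. hex_dist z y = i} - {ring_point z i nv}))\<^sup>*"
    (is "_ \<in> (Restr gedges ?R)\<^sup>*")
proof -
  have on_ring: "ring_point z i n \<in> ?R" if "n < 6 * i" "n \<noteq> nv" for n
    using that ring_point_inj[OF i that(1) nv(1), of z] hex_dist_ring_point[OF i, of z n] by auto
  show ?thesis
  proof (cases "p < nv \<and> nv < q")
    case False
    have "ring_point z i (p + t) \<in> ?R" if "t \<le> q - p" for t
      using False pq nv that by (intro on_ring) auto
    then have "\<forall>t\<le>q - p. ring_point z i (p + t) \<in> ?R" by blast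
    from ring_point_walk[OF i this] show ?thesis using pq by simp
  next
    case True
    have "ring_point z i (q + t) \<in> ?R" if t: "t \<le> p + 6 * i - q" for t
    proof (cases "q + t < 6 * i")
      case True
      then show ?thesis using \<open>p < nv \<and> nv < q\<close> by (intro on_ring) auto
    next
      case False
      define r where "r = q + t - 6 * i"
      have r: "q + t = r + 6 * i" "r < nv" using False t True pq unfolding r_def by auto
      then have "ring_point z i (q + t) = ring_point z i r" by (simp add: ring_point_periodic[OF i])
      moreover have "ring_point z i r \<in> ?R" using r nv by (intro on_ring) auto
      ultimately show ?thesis by simp
    qed
    then have "\<forall>t\<le>p + 6 * i - q. ring_point z i (q + t) \<in> ?R" by blast
    from ring_point_walk[OF i this]
    have "(ring_point z i q, ring_point z i (p + 6 * i)) \<in> (Restr gedges ?R)\<^sup>*"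
      using True pq by simp
    then show ?thesis using ring_point_periodic[OF i, of z p] by (auto intro: rtrancl_Restr_gedges_sym)
  qed
qed

lemma connected_ring_minus_point:
  assumes i: "i \<ge> 1" and v: "hex_dist z v = i"
  shows "connected_set ({y. hex_dist z y = i} - {v})"
  unfolding connected_set_def
proof (intro ballI)
  fix w x assume w: "w \<in> {y. hex_dist z y = i} - {v}" and x: "x \<in> {y. hex_dist z y = i} - {v}"
  obtain nv where nv: "nv < 6 * i" "ring_point z i nv = v" using ring_point_surj[OF i v] .
  obtain nx where nx: "nx < 6 * i" "ring_point z i nx = x" using ring_point_surj[OF i] x by blast
  obtain nw where nw: "nw < 6 * i" "ring_point z i nw = w" using ring_point_surj[OF i] w by blast
  have "nv \<noteq> nx" "nv \<noteq> nw" using nv nx nw w x by auto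
  then show "(w, x) \<in> (Restr gedges ({y. hex_dist z y = i} - {v}))\<^sup>*"
    using ring_arc_avoiding[OF i _ _ nv(1), of nw nx z] ring_arc_avoiding[OF i _ _ nv(1), of nx nw z]
      nv nx nw by (cases "nw \<le> nx") (auto intro: rtrancl_Restr_gedges_sym)
qed

lemma ring_in_free_component:
  assumes i: "i \<ge> 1" and v: "hex_dist z v = i" and v_unique: "\<forall>x\<in>X. hex_dist z x = i \<longrightarrow> x = v"
    and w: "hex_dist z w = i" "w \<noteq> v" and x: "hex_dist z x = i" "x \<noteq> v"
  shows "x \<in> reach (- X) w"
proof -
  have "(w, x) \<in> (Restr gedges ({y. hex_dist z y = i} - {v}))\<^sup>*"
    using connected_ring_minus_point[OF i v] w x unfolding connected_set_def by blast
  moreover have "{y. hex_dist z y = i} - {v} \<subseteq> - X" using v_unique by auto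
  ultimately show ?thesis unfolding reach_def using rtrancl_Restr_mono[of _ "- X"] by simp
qed

text \<open>
  Change of the distance to the centre when a ring point on side \<open>s\<close>, at offset \<open>j\<close>
  along that side (\<open>j = 0\<close> at corners), steps in direction \<open>s + t\<close>.
\<close>

definition ring_step_dist :: "nat \<Rightarrow> nat \<Rightarrow> int" where
  "ring_step_dist j t =
     (if t \<le> 1 then 1 else if t = 2 then 0 else if t = 3 then -1
      else if t = 4 then (if j = 0 then 0 else -1) else (if j = 0 then 1 else 0))"

lemma ring_step_dist_table:
  assumes "S < 6" "t < 6" "j < i"
  shows "hex_norm (int i * fst (dirvec S) + int j * fst (dirvec (S + 2)) + fst (dirvec (S + t)))
                  (int i * snd (dirvec S) + int j * snd (dirvec (S + 2)) + snd (dirvec (S + t)))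
         = int i + ring_step_dist j t"
proof -
  have "S = 0 \<or> S = 1 \<or> S = 2 \<or> S = 3 \<or> S = 4 \<or> S = 5"
    "t = 0 \<or> t = 1 \<or> t = 2 \<or> t = 3 \<or> t = 4 \<or> t = 5"
    using assms(1,2) by linarith+
  with assms(3) show ?thesis
    by (elim disjE; simp add: dirvec_def hex_norm_def ring_step_dist_def; arith?)
qed

lemma ring_local_frame:
  assumes i: "i \<ge> 1" and v: "hex_dist z v = i"
  obtains s j where "\<And>t. t < 6 \<Longrightarrow> int (hex_dist z (nb v (s + t))) = int i + ring_step_dist j t"
proof -
  obtain n where n: "ring_point z i n = v" using ring_point_surj[OF i v] .
  define S where "S = n div i mod 6"
  have e: "dirvec (n div i) = dirvec S" "dirvec (n div i + c) = dirvec (S + c)" for c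
    unfolding S_def by (simp, rule dirvec_add_mod6)
  show ?thesis
  proof (rule that)
    fix t :: nat assume t: "t < 6"
    have "int (hex_dist z (nb v (n div i + t))) =
      hex_norm (int i * fst (dirvec (n div i)) + int (n mod i) * fst (dirvec (n div i + 2))
                  + fst (dirvec (n div i + t)))
               (int i * snd (dirvec (n div i)) + int (n mod i) * snd (dirvec (n div i + 2))
                  + snd (dirvec (n div i + t)))"
      unfolding n[symmetric] of_nat_hex_dist_nb ring_point_def by (simp add: algebra_simps)
    also have "\<dots> = int i + ring_step_dist (n mod i) t"
      unfolding e by (rule ring_step_dist_table) (use i t in \<open>simp_all add: S_def\<close>)
    finally show "int (hex_dist z (nb v (n div i + t))) = int i + ring_step_dist (n mod i) t" .
  qed
qed

lemma inner_nb_touches_ring: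
  assumes i: "i \<ge> 1" and v: "hex_dist z v = i" and vu: "gadj v u" and u: "hex_dist z u + 1 = i"
  obtains w where "gadj u w" "w \<noteq> v" "hex_dist z w = i"
proof -
  obtain s j where d: "\<And>t. t < 6 \<Longrightarrow> int (hex_dist z (nb v (s + t))) = int i + ring_step_dist j t"
    using ring_local_frame[OF i v] by blast
  obtain t where t: "t < 6" "u = nb v (s + t)" using gadj_nb_relative[OF vu] .
  have "ring_step_dist j t = -1" using d[OF t(1)] t(2) u by simp
  then have "t = 3 \<or> t = 4 \<and> j \<noteq> 0" using t(1) unfolding ring_step_dist_def by (auto split: if_splits)
  then show ?thesis
  proof
    assume "t = 3"
    have "hex_dist z (nb v (s + 2)) = i" using d[of 2] by (simp add: ring_step_dist_def)
    moreover have "gadj u (nb v (s + 2))" using gadj_nb_nb[of 3 2 v s] gadj_sym t(2) \<open>t = 3\<close> by simp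
    ultimately show ?thesis using that by simp
  next
    assume "t = 4 \<and> j \<noteq> 0"
    then have "hex_dist z (nb v (s + 5)) = i" using d[of 5] by (simp add: ring_step_dist_def)
    moreover have "gadj u (nb v (s + 5))" using gadj_nb_nb[of 5 4 v s] t(2) \<open>t = 4 \<and> j \<noteq> 0\<close> by simp
    ultimately show ?thesis using that by simp
  qed
qed

section \<open>The area of a shape\<close>

lemma hex_norm_ray_mono:
  obtains k where "\<forall>t::nat. hex_norm a b \<le> hex_norm (a + int t * fst (dirvec k)) (b + int t * snd (dirvec k))"
proof -
  consider "\<bar>b\<bar> \<le> \<bar>a\<bar>" "a \<ge> 0" | "\<bar>b\<bar> \<le> \<bar>a\<bar>" "a < 0" | "\<bar>a\<bar> < \<bar>b\<bar>" "b \<ge> 0" | "\<bar>a\<bar> < \<bar>b\<bar>" "b < 0"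
    by linarith
  then show ?thesis
  proof cases
    case 1 then show ?thesis by (intro that[of 0]) (auto simp: dirvec_def hex_norm_def)
  next
    case 2 then show ?thesis by (intro that[of 3]) (auto simp: dirvec_def hex_norm_def)
  next
    case 3 then show ?thesis by (intro that[of 5]) (auto simp: dirvec_def hex_norm_def)
  next
    case 4 then show ?thesis by (intro that[of 2]) (auto simp: dirvec_def hex_norm_def)
  qed
qed

lemma outside_ball_in_outer_face:
  assumes S: "\<forall>x\<in>S. hex_dist z x \<le> e" and u: "hex_dist z u > e"
  shows "in_outer_face S u"
proof -
  obtain k where k: "\<forall>t::nat. hex_norm (fst u - fst z) (snd u - snd z) \<le>
      hex_norm (fst u - fst z + int t * fst (dirvec k)) (snd u - snd z + int t * snd (dirvec k))"
    using hex_norm_ray_mono .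
  define ray where "ray t = (fst u + int t * fst (dirvec k), snd u + int t * snd (dirvec k))" for t :: nat
  have "hex_dist z u \<le> hex_dist z (ray t)" for t
    using k unfolding hex_dist_def ray_def by (simp add: algebra_simps nat_mono)
  then have outside: "ray t \<notin> S" for t using S u by (meson leD order.strict_trans2)
  have ray_Suc: "ray (Suc t) = nb (ray t) k" for t unfolding ray_def nb_def by (simp add: algebra_simps)
  have "ray t \<in> reach (- S) u" for t
  proof (induction t)
    case 0 show ?case unfolding ray_def by (simp add: reach_refl)
  next
    case (Suc t) show ?case
      unfolding ray_Suc using reach_step[OF Suc _ gadj_nb] outside by (metis ComplI ray_Suc)
  qed
  moreover have "inj ray"
  proof (rule injI)
    fix s t assume "ray s = ray t"
    then have "int s * fst (dirvec k) = int t * fst (dirvec k)" "int s * snd (dirvec k) = int t * snd (dirvec k)"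
      unfolding ray_def by auto
    then show "s = t" using dirvec_nonzero[of k] by (auto simp: prod_eq_iff)
  qed
  ultimately have "infinite (reach (- S) u)"
    using infinite_iff_countable_subset[of "reach (- S) u"] by blast
  moreover have "u \<notin> S" using S u by force
  ultimately show ?thesis by (simp add: in_outer_face_iff_reach)
qed

lemma gdist_le_eccentricity_area:
  assumes "finite S" "x \<in> area S"
  shows "gdist z x \<le> eccentricity S z"
proof (rule ccontr)
  assume "\<not> ?thesis"
  then have far: "hex_dist z x > Max ((\<lambda>u. hex_dist z u) ` S)"
    unfolding eccentricity_def gdist_eq_hex_dist by simp
  have "\<forall>y\<in>S. hex_dist z y \<le> Max ((\<lambda>u. hex_dist z u) ` S)" using assms(1) by simp
  from outside_ball_in_outer_face[OF this far] have "in_outer_face S x" .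
  then show False using assms(2) unfolding area_def in_outer_face_def by blast
qed

lemma gadj_closed_eq_UNIV:
  assumes "h \<in> K" and closed: "\<And>k y. k \<in> K \<Longrightarrow> gadj k y \<Longrightarrow> y \<in> K"
  shows "K = UNIV"
proof -
  have "y \<in> K" if "(h, y) \<in> gedges ^^ n" for n y
    using that
  proof (induction n arbitrary: y)
    case (Suc n)
    then obtain y0 where "(h, y0) \<in> gedges ^^ n" "gadj y0 y" by (auto simp: gedges_def)
    then show ?case using Suc.IH closed by blast
  qed (use assms(1) in simp)
  then show ?thesis using relpow_hex_dist[of h] by blast
qed

lemma hole_connected_to_shape:
  assumes h: "h \<in> area S" "h \<notin> S"
  obtains s where "s \<in> S" "(h, s) \<in> (Restr gedges (area S))\<^sup>*"
proof -
  define K where "K = reach (- S) h"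
  have K_finite: "finite K" using h unfolding K_def area_def in_outer_face_iff_reach by auto
  have K_outside: "K \<subseteq> - S" using reach_subset h(2) unfolding K_def by blast
  have K_area: "K \<subseteq> area S"
  proof
    fix x assume x: "x \<in> K"
    then have "finite (reach (- S) x)" using finite_reach_trans K_finite unfolding K_def by blast
    then show "x \<in> area S" using K_outside x unfolding area_def in_outer_face_iff_reach by auto
  qed
  have "K \<noteq> UNIV" using K_finite by (auto simp: finite_prod)
  then obtain k s where ks: "k \<in> K" "gadj k s" "s \<notin> K"
    using gadj_closed_eq_UNIV[of h K] reach_refl unfolding K_def by blast
  then have "s \<in> S" using reach_step[of k "- S" h s] K_outside unfolding K_def by blast
  have "(h, k) \<in> (Restr gedges K)\<^sup>*"
    using rtrancl_Restr_reach ks(1) unfolding K_def reach_def by blast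
  then have "(h, k) \<in> (Restr gedges (area S))\<^sup>*" using rtrancl_Restr_mono[OF K_area] by blast
  moreover have "(k, s) \<in> Restr gedges (area S)"
    using ks \<open>s \<in> S\<close> K_area unfolding area_def by (auto simp: gedges_def)
  ultimately show ?thesis using \<open>s \<in> S\<close> that by (meson rtrancl_into_rtrancl)
qed

lemma connected_set_area:
  assumes "connected_set S"
  shows "connected_set (area S)"
  unfolding connected_set_def
proof (intro ballI)
  have to_S: "\<exists>s\<in>S. (a, s) \<in> (Restr gedges (area S))\<^sup>*" if "a \<in> area S" for a
  proof (cases "a \<in> S")
    case False
    then show ?thesis using hole_connected_to_shape[OF that] by blast
  qed blast
  fix a b assume "a \<in> area S" "b \<in> area S"
  then obtain sa sb where sa: "sa \<in> S" "(a, sa) \<in> (Restr gedges (area S))\<^sup>*"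
    and sb: "sb \<in> S" "(b, sb) \<in> (Restr gedges (area S))\<^sup>*" using to_S by blast
  have "(sa, sb) \<in> (Restr gedges S)\<^sup>*" using assms sa(1) sb(1) unfolding connected_set_def by blast
  then have "(sa, sb) \<in> (Restr gedges (area S))\<^sup>*"
    by (rule rtrancl_Restr_mono[rotated]) (auto simp: area_def)
  moreover have "(sb, b) \<in> (Restr gedges (area S))\<^sup>*" using sb(2) by (rule rtrancl_Restr_gedges_sym)
  ultimately show "(a, b) \<in> (Restr gedges (area S))\<^sup>*" using sa(2) by (meson rtrancl_trans)
qed

section \<open>Eroding a strictly convex erodable point\<close>

lemma SCE_mem: "SCE S v \<Longrightarrow> v \<in> S"
  unfolding SCE_def erodable_def redundant_def by simp

lemma SCE_redundant: "SCE S v \<Longrightarrow> redundant S v"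
  unfolding SCE_def erodable_def by simp

lemma SCE_outside_window:
  assumes "SCE S v"
  obtains s where "\<forall>j<3. nb v (s + j) \<notin> S"
proof -
  from assms obtain B where lb: "local_boundary S v B" and bc: "boundary_count B > 0"
    unfolding SCE_def by blast
  from lb obtain s k where k: "B = {(s + j) mod 6 | j. j < k}" and out: "\<forall>j<k. nb v ((s + j) mod 6) \<notin> S"
    unfolding local_boundary_def by blast
  have "B = (\<lambda>j. (s + j) mod 6) ` {..<k}" using k by auto
  then have "card B \<le> k" using card_image_le[of "{..<k}" "\<lambda>j. (s + j) mod 6"] by simp
  moreover have "card B \<ge> 3" using bc unfolding boundary_count_def by simp
  ultimately show ?thesis using out that[of s] by simp
qed

lemma redundant_nbs_not_interleaved:
  assumes red: "redundant S v"
    and ord: "p < r1" "r1 < q" "q < r2" "r2 < p + 6"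
    and inS: "nb v (k + p) \<in> S" "nb v (k + q) \<in> S"
    and outS: "nb v (k + r1) \<notin> S" "nb v (k + r2) \<notin> S"
  shows False
proof -
  define N where "N = {u. gadj v u \<and> u \<in> S}"
  have path: "(nb v (k + p), nb v (k + q)) \<in> (Restr gedges N)\<^sup>*"
    using red inS unfolding redundant_def connected_set_def N_def by (auto simp: gadj_nb)
  define Arc where "Arc = {nb v (k + t) | t. r2 < t \<and> t < r1 + 6}"
  have "nb v (k + p) = nb v (k + (p + 6))" unfolding nb_eq_iff by (simp add: add.assoc[symmetric])
  then have start: "nb v (k + p) \<in> Arc" unfolding Arc_def using ord by auto
  have step: "y' \<in> Arc" if "y \<in> Arc" "(y, y') \<in> Restr gedges N" for y y'
  proof -
    from that(1) obtain t where t: "y = nb v (k + t)" "r2 < t" "t < r1 + 6" unfolding Arc_def by blast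
    from that(2) have y': "y' \<in> S" "gadj y y'" "gadj v y'" by (auto simp: gedges_def N_def)
    have "t \<ge> 1" using t(2) by simp
    then consider "y' = nb v (k + (t + 1))" | "y' = nb v (k + (t - 1))"
      using gadj_nb_shift[OF y'(2)[unfolded t(1)] y'(3)] by blast
    then show ?thesis
    proof cases
      case 1
      have "t + 1 \<noteq> r1 + 6"
      proof
        assume "t + 1 = r1 + 6"
        then have "nb v (k + (t + 1)) = nb v (k + r1)"
          unfolding nb_eq_iff nat_mod_eq_iff_int_dvd by simp
        then show False using 1 outS y'(1) by simp
      qed
      then show ?thesis using 1 t unfolding Arc_def by (intro CollectI exI[of _ "t + 1"]) simp
    next
      case 2
      then have "t - 1 \<noteq> r2" using outS y'(1) by auto
      then have "r2 < t - 1" using t(2) by linarith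
      then show ?thesis using 2 t(3) unfolding Arc_def by (intro CollectI exI[of _ "t - 1"]) simp
    qed
  qed
  have "nb v (k + q) \<in> Arc"
    using path by (induction rule: rtrancl_induct) (use start step in blast)+
  then obtain t where "nb v (k + q) = nb v (k + t)" "r2 < t" "t < r1 + 6" unfolding Arc_def by blast
  then show False using ord unfolding nb_eq_iff nat_mod_eq_iff_int_dvd by presburger
qed

lemma connected_set_remove_redundant:
  assumes conn: "connected_set S" and red: "redundant S v"
  shows "connected_set (S - {v})"
  unfolding connected_set_def
proof (intro ballI)
  fix a b assume a: "a \<in> S - {v}" and b: "b \<in> S - {v}"
  define R where "R = Restr gedges (S - {v})"
  define N where "N = {u. gadj v u \<and> u \<in> S}"
  have N_connected: "(x, y) \<in> R\<^sup>*" if "x \<in> N" "y \<in> N" for x y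
  proof -
    have "(x, y) \<in> (Restr gedges N)\<^sup>*"
      using red that unfolding redundant_def connected_set_def N_def by blast
    moreover have "N \<subseteq> S - {v}" unfolding N_def using gadj_irrefl by auto
    ultimately show ?thesis unfolding R_def by (rule rtrancl_Restr_mono[rotated])
  qed
  \<comment> \<open>a walk in S from a either avoids v, or its last visit to v can be bypassed inside N\<close>
  have "(y \<noteq> v \<longrightarrow> (a, y) \<in> R\<^sup>*) \<and> (y = v \<longrightarrow> (\<exists>n\<in>N. (a, n) \<in> R\<^sup>*))"
    if "(a, y) \<in> (Restr gedges S)\<^sup>*" for y
    using that
  proof (induction rule: rtrancl_induct)
    case base then show ?case using a by simp
  next
    case (step y y')
    then have yy': "gadj y y'" "y \<in> S" "y' \<in> S" by (auto simp: gedges_def)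
    consider "y' = v" | "y = v" "y' \<noteq> v" | "y \<noteq> v" "y' \<noteq> v" by blast
    then show ?case
    proof cases
      case 1
      then have "y \<noteq> v" using yy'(1) gadj_irrefl by blast
      moreover have "y \<in> N" using 1 yy' gadj_sym unfolding N_def by simp
      ultimately show ?thesis using step.IH 1 by blast
    next
      case 2
      then obtain n where "n \<in> N" "(a, n) \<in> R\<^sup>*" using step.IH by blast
      moreover have "y' \<in> N" using yy' 2 unfolding N_def by simp
      ultimately show ?thesis using N_connected 2 by (meson rtrancl_trans)
    next
      case 3
      then have "(y, y') \<in> R" using yy' unfolding R_def gedges_def by simp
      then show ?thesis using step.IH 3 by (meson rtrancl.rtrancl_into_rtrancl)
    qed
  qed
  moreover have "(a, b) \<in> (Restr gedges S)\<^sup>*" using conn a b unfolding connected_set_def by blast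
  ultimately show "(a, b) \<in> (Restr gedges (S - {v}))\<^sup>*" using b unfolding R_def by blast
qed

lemma window_avoiding_arc:
  fixes w t1 ta t2 tu :: nat
  assumes "w < 6" "0 < t1" "t1 < ta" "ta < t2" "t2 < 6" "tu < 6" "tu \<noteq> t1" "tu \<noteq> t2"
    and "\<And>j. j < 3 \<Longrightarrow> \<not> (t1 \<le> (w + j) mod 6 \<and> (w + j) mod 6 \<le> t2) \<and> (w + j) mod 6 \<noteq> tu"
  shows "tu = ta"
proof -
  have "w = 0 \<or> w = 1 \<or> w = 2 \<or> w = 3 \<or> w = 4 \<or> w = 5" using assms(1) by linarith
  moreover note assms(9)[of 0] assms(9)[of 1] assms(9)[of 2]
  ultimately show ?thesis using assms(2-8) by (elim disjE; simp; arith)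
qed

lemma enclosed_nb_blocked_arc:
  assumes XS: "X \<subseteq> S" and red: "redundant S v"
    and enclosed: "\<forall>w. w \<in> S \<and> w \<notin> X \<longrightarrow> finite (reach (- X) w)"
    and a: "gadj v a" "a \<notin> X" "finite (reach (- X) a)"
    and b: "gadj v b" "b \<notin> X" "infinite (reach (- X) b)"
  obtains k ta t1 t2 where "a = nb v (k + ta)" "0 < t1" "t1 < ta" "ta < t2" "t2 < 6"
    "nb v (k + t1) \<in> X" "nb v (k + t2) \<in> X" "\<And>t. t1 \<le> t \<Longrightarrow> t \<le> t2 \<Longrightarrow> nb v (k + t) \<in> S"
proof -
  have bS: "b \<notin> S" using enclosed b by blast
  obtain k where b0: "b = nb v (k + 0)" using b(1) unfolding gadj_def by auto
  have b6: "b = nb v (k + 6)" unfolding b0 nb_eq_iff by simp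
  obtain ta where ta: "ta < 6" "a = nb v (k + ta)" using gadj_nb_relative[OF a(1)] .
  \<comment> \<open>an \<open>X\<close>-free arc of neighbours would join the finite component of \<open>a\<close> to the infinite one of \<open>b\<close>\<close>
  have blocked: "\<exists>t. t1 < t \<and> t < t2 \<and> nb v (k + t) \<in> X"
    if "t1 \<le> t2" "{nb v (k + t1), nb v (k + t2)} = {a, b}" for t1 t2
  proof (rule ccontr)
    assume "\<nexists>t. t1 < t \<and> t < t2 \<and> nb v (k + t) \<in> X"
    then have "\<forall>t. t1 \<le> t \<and> t \<le> t2 \<longrightarrow> nb v (k + t) \<in> - X"
      using that(2) a(2) b(2) by (auto simp: doubleton_eq_iff le_less)
    from nb_arc_path[OF this that(1)] have "nb v (k + t2) \<in> reach (- X) (nb v (k + t1))"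
      unfolding reach_def by simp
    with reach_sym[OF this] have "b \<in> reach (- X) a" using that(2) by (auto simp: doubleton_eq_iff)
    then show False using finite_reach_trans a(3) b(3) by blast
  qed
  obtain t1 where t1: "0 < t1" "t1 < ta" "nb v (k + t1) \<in> X"
    using blocked[of 0 ta] ta b0 by (auto simp: insert_commute)
  obtain t2 where t2: "ta < t2" "t2 < 6" "nb v (k + t2) \<in> X"
    using blocked[of ta 6] ta b6 by auto
  note t12 = t1 t2
  have "nb v (k + t) \<in> S" if "t1 \<le> t" "t \<le> t2" for t
  proof (rule ccontr)
    assume out: "nb v (k + t) \<notin> S"
    then have "t1 < t" "t < t2" using that t12 XS by (auto simp: le_less)
    then show False
      using redundant_nbs_not_interleaved[OF red, of t1 t t2 6 k] t12 XS out b6 bS by auto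
  qed
  then show ?thesis using that ta(2) t12 by blast
qed

lemma SCE_enclosed_nb_unique:
  assumes XS: "X \<subseteq> S" and sce: "SCE S v"
    and enclosed: "\<forall>w. w \<in> S \<and> w \<notin> X \<longrightarrow> finite (reach (- X) w)"
    and a: "gadj v a" "a \<notin> X" "finite (reach (- X) a)"
    and b: "gadj v b" "b \<notin> X" "infinite (reach (- X) b)"
  shows "a \<in> S \<and> (\<forall>u. gadj v u \<and> u \<in> S \<and> u \<notin> X \<longrightarrow> u = a)"
proof -
  obtain k ta t1 t2 where ta: "a = nb v (k + ta)" and t12: "0 < t1" "t1 < ta" "ta < t2" "t2 < 6"
    "nb v (k + t1) \<in> X" "nb v (k + t2) \<in> X" and arc: "\<And>t. t1 \<le> t \<Longrightarrow> t \<le> t2 \<Longrightarrow> nb v (k + t) \<in> S"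
    using enclosed_nb_blocked_arc[OF XS SCE_redundant[OF sce] enclosed a b] by blast
  have "a \<in> S" using arc[of ta] t12 ta by simp
  moreover have "u = a" if u: "gadj v u" "u \<in> S" "u \<notin> X" for u
  proof -
    obtain tu where tu: "tu < 6" "u = nb v (k + tu)" using gadj_nb_relative[OF u(1)] .
    obtain s0 where win: "\<forall>j<3. nb v (s0 + j) \<notin> S" using SCE_outside_window[OF sce] .
    obtain w where w: "w < 6" "nb v s0 = nb v (k + w)" using nb_relative .
    have "nb v (k + (w + j) mod 6) \<notin> S" if "j < 3" for j
    proof -
      have "nb v (k + (w + j) mod 6) = nb v (s0 + j)"
        using nb_add_cong[OF w(2), of j] by (simp add: nb_eq_iff mod_add_right_eq add.assoc)
      then show ?thesis using win that by simp
    qed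
    then have "\<not> (t1 \<le> (w + j) mod 6 \<and> (w + j) mod 6 \<le> t2) \<and> (w + j) mod 6 \<noteq> tu" if "j < 3" for j
      using arc tu u(2) that by blast
    moreover have "tu \<noteq> t1" "tu \<noteq> t2" using tu u(3) t12 by auto
    ultimately have "tu = ta" using window_avoiding_arc[OF w(1) t12(1-4) tu(1)] by blast
    then show "u = a" using tu ta by simp
  qed
  ultimately show ?thesis by blast
qed

text \<open>
  Freeing \<open>v\<close> can only merge components through \<open>v\<close>; the refill hypothesis and
  \<open>SCE_enclosed_nb_unique\<close> prevent merging with an infinite one.
\<close>

lemma enclosed_after_erosion:
  assumes XS: "X \<subseteq> S" and sce: "SCE S v"
    and enclosed: "\<forall>w. w \<in> S \<and> w \<notin> X \<longrightarrow> finite (reach (- X) w)"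
    and X': "X \<subseteq> X' \<union> {v}"
    and refill: "(\<exists>u. gadj v u \<and> u \<in> S \<and> u \<notin> X) \<longrightarrow> (\<exists>u. gadj v u \<and> u \<in> S \<and> u \<notin> X \<and> u \<in> X')"
    and w: "w \<in> S" "w \<notin> X'" "w \<noteq> v"
  shows "finite (reach (- X') w)"
proof -
  have wX: "w \<notin> X" using w X' by auto
  define C where "C = reach (- X) w"
  have C: "finite C" using enclosed w(1) wX unfolding C_def by blast
  have B: "- X' \<subseteq> - X \<union> {v}" using X' by auto
  show ?thesis
  proof (cases "\<exists>a. gadj v a \<and> a \<notin> X' \<and> a \<in> C")
    case False
    then have "reach (- X') w \<subseteq> C"
      unfolding C_def using wX by (intro reach_add_point_avoided[OF B]) auto
    then show ?thesis using C finite_subset by blast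
  next
    case True
    then obtain a where a: "gadj v a" "a \<notin> X'" "a \<in> C" by blast
    have aX: "a \<notin> X" using a(1,2) X' gadj_irrefl by blast
    have a_enclosed: "finite (reach (- X) a)" using finite_reach_trans a(3) C unfolding C_def by blast
    have nbs_enclosed: "finite (reach (- X) y)" if y: "gadj v y" "y \<in> - X' - {v}" for y
    proof (rule ccontr)
      assume "infinite (reach (- X) y)"
      moreover have "y \<notin> X" using y X' by auto
      ultimately have "a \<in> S" and a_unique: "\<forall>u. gadj v u \<and> u \<in> S \<and> u \<notin> X \<longrightarrow> u = a"
        using SCE_enclosed_nb_unique[OF XS sce enclosed a(1) aX a_enclosed y(1)] by auto
      then obtain u where "gadj v u" "u \<in> S" "u \<notin> X" "u \<in> X'" using refill a(1) aX by blast
      then show False using a_unique a(2) by blast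
    qed
    have "reach (- X') w \<subseteq> C \<union> {v} \<union> (\<Union>y\<in>{y. gadj v y \<and> y \<in> - X' - {v}}. reach (- X) y)"
      using reach_add_point[OF B] wX unfolding C_def by blast
    moreover have "finite {y. gadj v y \<and> y \<in> - X' - {v}}"
      using finite_gadj[of v] by (rule finite_subset[rotated]) auto
    then have "finite (C \<union> {v} \<union> (\<Union>y\<in>{y. gadj v y \<and> y \<in> - X' - {v}}. reach (- X) y))"
      using C nbs_enclosed by blast
    ultimately show ?thesis by (rule finite_subset)
  qed
qed

lemma outer_nb_at_corner:
  assumes ring_C: "\<And>t. t < 6 \<Longrightarrow> ring_step_dist j t = 0 \<Longrightarrow> nb v (s + t) \<in> C"
    and step_C: "\<And>x x'. x \<in> C \<Longrightarrow> gadj x x' \<Longrightarrow> x' \<notin> X \<Longrightarrow> x' \<in> C"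
    and y: "gadj v y" "y \<notin> X" "y \<notin> C"
  shows "j = 0 \<and> y = nb v s \<and> nb v (s + 1) \<in> X \<and> nb v (s + 5) \<in> X"
proof -
  have n6: "nb v (s + 6) = nb v (s + 0)" unfolding nb_eq_iff by simp
  have n2: "nb v (s + 2) \<in> C" by (rule ring_C) (simp_all add: ring_step_dist_def)
  obtain ty where ty: "ty < 6" "y = nb v (s + ty)" using gadj_nb_relative[OF y(1)] .
  have C1: "nb v (s + 1) \<in> C \<or> nb v (s + 1) \<in> X" and C3: "nb v (s + 3) \<in> C \<or> nb v (s + 3) \<in> X"
    using step_C[OF n2 gadj_sym[OF gadj_nb_nb[of 2 1 v s]]] step_C[OF n2 gadj_nb_nb[of 3 2 v s]]
    by auto
  have j0: "j = 0"
  proof (rule ccontr)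
    assume "j \<noteq> 0"
    then have n5: "nb v (s + 5) \<in> C" by (intro ring_C) (simp_all add: ring_step_dist_def)
    have "nb v (s + 4) \<in> C \<or> nb v (s + 4) \<in> X" "nb v (s + 0) \<in> C \<or> nb v (s + 0) \<in> X"
      using step_C[OF n5 gadj_sym[OF gadj_nb_nb[of 5 4 v s]]] step_C[OF n5 gadj_nb_nb[of 6 5 v s]] n6
      by auto
    then show False using y(2,3) ty C1 C3 n2 n5 by (cases rule: less_6_cases[OF ty(1)]) auto
  qed
  then have n4: "nb v (s + 4) \<in> C" by (intro ring_C) (simp_all add: ring_step_dist_def)
  have C5: "nb v (s + 5) \<in> C \<or> nb v (s + 5) \<in> X"
    using step_C[OF n4 gadj_nb_nb[of 5 4 v s]] by auto
  have "ty = 0" using y(2,3) ty C1 C3 C5 n2 n4 by (cases rule: less_6_cases[OF ty(1)]) auto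
  then have ys: "y = nb v (s + 0)" using ty by simp
  have "nb v (s + 1) \<in> X"
    using C1 step_C[OF _ gadj_sym[OF gadj_nb_nb[of 1 0 v s]]] ys y(2,3) by auto
  moreover have "nb v (s + 5) \<in> X"
    using C5 step_C[OF _ gadj_nb_nb[of 6 5 v s]] n6 ys y(2,3) by auto
  ultimately show ?thesis using j0 ys by simp
qed

lemma outside_window_hits:
  assumes win: "\<forall>j<3. nb v (s0 + j) \<notin> S"
    and S: "nb v (s + 1) \<in> S" "nb v (s + 5) \<in> S" "nb v (s + t) \<in> S" and t: "t = 2 \<or> t = 3 \<or> t = 4"
  shows False
proof -
  obtain w where w: "w < 6" "nb v s0 = nb v (s + w)" using nb_relative .
  have out: "nb v (s + (w + j)) \<notin> S" if "j < 3" for j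
  proof -
    have "nb v (s0 + j) \<notin> S" using win that by blast
    then show ?thesis using nb_add_cong[OF w(2), of j] by (simp add: add.assoc)
  qed
  show False using out[of 0] out[of 1] out[of 2] S t
    by (cases rule: less_6_cases[OF w(1)]) auto
qed

text \<open>
  The ring through \<open>v\<close> minus \<open>v\<close> is free and lies in the component of \<open>w\<close>, which the
  outer neighbour of \<open>v\<close> cannot touch; this pins \<open>v\<close> down to a corner whose free directions
  contain no three consecutive ones.
\<close>

lemma SCE_ring_unenclosed:
  assumes i: "i \<ge> 1" and v: "hex_dist z v = i" "v \<in> X" and XS: "X \<subseteq> S" and sce: "SCE S v"
    and v_unique: "\<forall>x\<in>X. hex_dist z x = i \<longrightarrow> x = v"
    and u: "gadj v u" "u \<in> S" "u \<notin> X"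
    and w: "hex_dist z w = i" "w \<noteq> v"
  shows "infinite (reach (- X) w)"
proof
  assume fin: "finite (reach (- X) w)"
  define C where "C = reach (- X) w"
  have wX: "w \<notin> X" using v_unique w by auto
  have step_C: "x' \<in> C" if "x \<in> C" "gadj x x'" "x' \<notin> X" for x x'
    using reach_step[OF that(1)[unfolded C_def] _ that(2)] reach_subset[OF that(1)[unfolded C_def]] wX that(3)
    unfolding C_def by simp
  obtain y where y: "gadj v y" "in_outer_face S y"
    using sce unfolding SCE_def erodable_def on_outer_boundary_def by blast
  have yS: "y \<notin> S" using y(2) by (simp add: in_outer_face_iff_reach)
  have yC: "y \<notin> C" unfolding C_def by (rule outer_face_not_in_enclosed[OF y(2) XS fin])
  obtain s j where d: "\<And>t. t < 6 \<Longrightarrow> int (hex_dist z (nb v (s + t))) = int i + ring_step_dist j t"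
    using ring_local_frame[OF i v(1)] by blast
  have ring_nbs: "nb v (s + t) \<in> C" if "t < 6" "ring_step_dist j t = 0" for t
    unfolding C_def using d[OF that(1)] that(2) by (intro ring_in_free_component[OF i v(1) v_unique w]) simp_all
  have "y \<notin> X" using yS XS by auto
  from outer_nb_at_corner[of j v s C X, OF ring_nbs step_C y(1) this yC]
  have corner: "y = nb v s" "nb v (s + 1) \<in> X" "nb v (s + 5) \<in> X" by auto
  obtain tu where tu: "tu < 6" "u = nb v (s + tu)" using gadj_nb_relative[OF u(1)] .
  have "tu \<noteq> 0"
  proof
    assume "tu = 0"
    then have "u = y" using tu corner(1) by simp
    then show False using u(2) yS by simp
  qed
  moreover have "tu \<noteq> 1" "tu \<noteq> 5" using tu corner(2,3) u(3) by auto
  ultimately have "tu = 2 \<or> tu = 3 \<or> tu = 4" using tu(1) by linarith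
  moreover obtain s0 where "\<forall>j<3. nb v (s0 + j) \<notin> S" using SCE_outside_window[OF sce] .
  moreover have "nb v (s + 1) \<in> S" "nb v (s + 5) \<in> S" "nb v (s + tu) \<in> S"
    using corner XS tu u(2) by auto
  ultimately show False using outside_window_hits by blast
qed

lemma SCE_free_nb_same_dist:
  assumes XS: "X \<subseteq> S" and v: "v \<in> X" and sce: "SCE S v" and conn: "connected_set S"
    and enclosed: "\<forall>w. w \<in> S \<and> w \<notin> X \<longrightarrow> finite (reach (- X) w)"
    and u: "gadj v u" "u \<in> S" "u \<notin> X"
    and z: "z \<in> S" "z \<noteq> v"
    and v_unique: "\<forall>x\<in>X. hex_dist z x = hex_dist z v \<longrightarrow> x = v"
  shows "hex_dist z u = hex_dist z v"
proof (rule ccontr)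
  assume ne: "hex_dist z u \<noteq> hex_dist z v"
  define i where "i = hex_dist z v"
  have i: "i \<ge> 1" using z(2) unfolding i_def by (cases "hex_dist z v") auto
  have ring_enclosed_free: False if "hex_dist z w = i" "w \<noteq> v" "w \<in> S" "w \<notin> X" for w
    using SCE_ring_unenclosed[OF i _ v XS sce _ u that(1,2)] enclosed that(3,4) v_unique
    unfolding i_def by blast
  have "hex_dist z u \<le> i + 1" "i \<le> hex_dist z u + 1"
    using hex_dist_gadj[OF u(1), of z] hex_dist_gadj[OF gadj_sym[OF u(1)], of z] unfolding i_def by auto
  then consider "hex_dist z u + 1 = i" | "hex_dist z u = i + 1" using ne unfolding i_def by linarith
  then show False
  proof cases
    case 1
    obtain w where w: "gadj u w" "w \<noteq> v" "hex_dist z w = i"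
      using inner_nb_touches_ring[OF i _ u(1) 1] unfolding i_def by blast
    have "w \<notin> X" using v_unique w unfolding i_def by blast
    then have "w \<in> reach (- X) u" using reach_step[OF reach_refl _ w(1)] u(3) by simp
    then have "finite (reach (- X) w)" using enclosed u(2,3) finite_reach_trans by blast
    then show False using SCE_ring_unenclosed[OF i _ v XS sce _ u w(3,2)] v_unique
      unfolding i_def by blast
  next
    case 2
    have "(z, u) \<in> (Restr gedges (S - {v}))\<^sup>*"
      using connected_set_remove_redundant[OF conn] sce z u(1,2) gadj_irrefl
      unfolding SCE_def erodable_def connected_set_def by blast
    then obtain x where "x \<in> S - {v}" "hex_dist z x = i"
      using path_attains_dist[of z u "S - {v}" z i] z 2 by auto
    then show False using ring_enclosed_free v_unique unfolding i_def by blast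
  qed
qed

lemma gapless_move_point:
  fixes d :: "point \<Rightarrow> nat"
  assumes gapless: "\<forall>i. (\<exists>x\<in>H. d x \<le> i) \<and> i \<le> E \<longrightarrow> (\<exists>x\<in>H. d x = i)"
    and H': "H - {v} \<subseteq> H'" "H' \<subseteq> insert u H" "u \<in> H'" "v \<in> H"
    and same: "(\<forall>x\<in>H. x \<noteq> v \<longrightarrow> d x \<noteq> d v) \<Longrightarrow> d u = d v"
    and step: "d v \<le> d u + 1"
  shows "\<forall>i. (\<exists>x\<in>H'. d x \<le> i) \<and> i \<le> E \<longrightarrow> (\<exists>x\<in>H'. d x = i)"
proof (intro allI impI)
  fix i assume i: "(\<exists>x\<in>H'. d x \<le> i) \<and> i \<le> E"
  have keep: "\<exists>x\<in>H'. d x = d y" if "y \<in> H" for y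
  proof (cases "y = v \<and> (\<forall>x\<in>H. x \<noteq> v \<longrightarrow> d x \<noteq> d v)")
    case True then show ?thesis using same H'(3) by auto
  next
    case False then show ?thesis using that H'(1) by blast
  qed
  from i obtain x where x: "x \<in> H'" "d x \<le> i" by blast
  show "\<exists>x\<in>H'. d x = i"
  proof (cases "x \<in> H \<or> d v \<le> i")
    case True
    then obtain y where "y \<in> H" "d y \<le> i" using x H'(4) by blast
    then show ?thesis using gapless i keep by metis
  next
    case False
    then have "x = u" "i < d v" using x H'(2) by auto
    then show ?thesis using x step by (intro bexI[of _ u]) auto
  qed
qed

lemma gapless_heads_expand:
  assumes XS: "X \<subseteq> S" and v: "v \<in> X" "v \<in> H" and XH: "X \<subseteq> H"
    and sce: "SCE S v" and conn: "connected_set S"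
    and enclosed: "\<forall>w. w \<in> S \<and> w \<notin> X \<longrightarrow> finite (reach (- X) w)"
    and u: "gadj v u" "u \<in> S" "u \<notin> X" and z: "z \<in> S" "z \<noteq> v"
    and gapless: "\<forall>i. (\<exists>x\<in>H. hex_dist z x \<le> i) \<and> i \<le> E \<longrightarrow> (\<exists>x\<in>H. hex_dist z x = i)"
  shows "\<forall>i. (\<exists>x\<in>insert u (H - {v}). hex_dist z x \<le> i) \<and> i \<le> E
           \<longrightarrow> (\<exists>x\<in>insert u (H - {v}). hex_dist z x = i)"
proof (rule gapless_move_point[OF gapless _ _ _ v(2)])
  show "hex_dist z v \<le> hex_dist z u + 1" by (rule hex_dist_gadj[OF gadj_sym[OF u(1)]])
  show "hex_dist z u = hex_dist z v" if "\<forall>x\<in>H. x \<noteq> v \<longrightarrow> hex_dist z x \<noteq> hex_dist z v"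
    using SCE_free_nb_same_dist[OF XS v(1) sce conn enclosed u z] that XH by blast
qed auto

section \<open>The invariant of DLE\<close>

fun head_of :: "loc \<Rightarrow> point" where
  "head_of (Contr x) = x"
| "head_of (Exp h t) = h"

definition heads :: "'p set \<Rightarrow> 'p conf \<Rightarrow> point set" where
  "heads P C = (\<lambda>p. head_of (pos C p)) ` P"

definition eligible_occupied :: "'p set \<Rightarrow> 'p conf \<Rightarrow> point set" where
  "eligible_occupied P C = elig C \<inter> occupied P C"

text \<open>
  The last two conjuncts are the geometric core: eligible points outside the eligible occupied
  ones are enclosed by them, and distances from eligible points to heads have no gaps up to
  the eccentricity in the initial shape \<open>S0\<close>.
\<close>

definition shape_inv :: "'p set \<Rightarrow> point set \<Rightarrow> 'p conf \<Rightarrow> bool" where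
  "shape_inv P S0 C \<longleftrightarrow>
     (\<forall>p\<in>P. \<forall>h t. pos C p = Exp h t \<longrightarrow> t \<notin> elig C) \<and>
     (\<forall>p\<in>P. \<forall>q\<in>P. p \<noteq> q \<longrightarrow> occ_pts (pos C p) \<inter> occ_pts (pos C q) = {}) \<and>
     elig C \<subseteq> area S0 \<and> occupied P C \<subseteq> area S0 \<and> connected_set (elig C) \<and>
     (\<forall>w. w \<in> elig C \<and> w \<notin> eligible_occupied P C
        \<longrightarrow> finite (reach (- eligible_occupied P C) w)) \<and>
     (\<forall>z\<in>elig C. \<forall>i. (\<exists>x\<in>heads P C. hex_dist z x \<le> i) \<and> i \<le> eccentricity S0 z
        \<longrightarrow> (\<exists>x\<in>heads P C. hex_dist z x = i))"

definition status_inv :: "'p set \<Rightarrow> 'p conf \<Rightarrow> bool" where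
  "status_inv P C \<longleftrightarrow>
     (\<forall>p\<in>P. terminated C p \<longrightarrow> (\<exists>x. pos C p = Contr x)) \<and>
     (\<forall>p\<in>P. stat C p = Undecided \<longrightarrow> head_of (pos C p) \<in> elig C) \<and>
     (\<forall>p\<in>P. stat C p = Leader \<longrightarrow> (\<exists>x. pos C p = Contr x \<and> x \<in> elig C))"

definition dle_inv :: "'p set \<Rightarrow> point set \<Rightarrow> 'p conf \<Rightarrow> bool" where
  "dle_inv P S0 C \<longleftrightarrow> shape_inv P S0 C \<and> status_inv P C"

lemma shape_inv_cong:
  "pos C' = pos C \<Longrightarrow> elig C' = elig C \<Longrightarrow> shape_inv P S0 C' = shape_inv P S0 C"
  unfolding shape_inv_def eligible_occupied_def heads_def occupied_def by simp

lemma head_of_mem_occ_pts: "head_of l \<in> occ_pts l"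
  by (cases l) auto

lemma dle_inv_init:
  assumes "permitted_init P C0"
  shows "dle_inv P (occupied P C0) C0"
proof -
  define S0 where "S0 = occupied P C0"
  from assms have contr: "\<forall>p\<in>P. \<exists>v. pos C0 p = Contr v" and inj: "inj_on (pos C0) P"
    and shape: "connected_shape S0" and status: "\<forall>p\<in>P. stat C0 p = Undecided \<and> \<not> terminated C0 p"
    and elig: "elig C0 = area S0" unfolding permitted_init_def S0_def by auto
  have S0: "finite S0" "S0 \<noteq> {}" "connected_set S0" using shape unfolding connected_shape_def by auto
  have S0_area: "S0 \<subseteq> area S0" unfolding area_def by blast
  have "occ_pts (pos C0 p) = {head_of (pos C0 p)}" if "p \<in> P" for p using contr that by fastforce
  then have heads: "heads P C0 = S0" unfolding heads_def S0_def occupied_def by auto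
  have occ: "eligible_occupied P C0 = S0" unfolding eligible_occupied_def elig S0_def using S0_area S0_def by blast
  have "shape_inv P S0 C0"
    unfolding shape_inv_def heads occ
  proof (intro conjI)
    show "\<forall>p\<in>P. \<forall>h t. pos C0 p = Exp h t \<longrightarrow> t \<notin> elig C0" using contr by fastforce
    show "\<forall>p\<in>P. \<forall>q\<in>P. p \<noteq> q \<longrightarrow> occ_pts (pos C0 p) \<inter> occ_pts (pos C0 q) = {}"
    proof (intro ballI impI)
      fix p q assume pq: "p \<in> P" "q \<in> P" "p \<noteq> q"
      then have "pos C0 p \<noteq> pos C0 q" using inj unfolding inj_on_def by blast
      moreover obtain x y where "pos C0 p = Contr x" "pos C0 q = Contr y" using contr pq by blast
      ultimately show "occ_pts (pos C0 p) \<inter> occ_pts (pos C0 q) = {}" by auto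
    qed
    show "connected_set (elig C0)" unfolding elig by (rule connected_set_area[OF S0(3)])
    show "\<forall>w. w \<in> elig C0 \<and> w \<notin> S0 \<longrightarrow> finite (reach (- S0) w)"
      unfolding elig area_def in_outer_face_iff_reach by auto
    show "elig C0 \<subseteq> area S0" "occupied P C0 \<subseteq> area S0" using elig S0_area S0_def by simp_all
    show "\<forall>z\<in>elig C0. \<forall>i. (\<exists>x\<in>S0. hex_dist z x \<le> i) \<and> i \<le> eccentricity S0 z
        \<longrightarrow> (\<exists>x\<in>S0. hex_dist z x = i)" using connected_set_dists_gapless[OF S0] by blast
  qed
  moreover have "status_inv P C0"
  proof -
    have "head_of (pos C0 p) \<in> elig C0" if "p \<in> P" for p
      using that head_of_mem_occ_pts S0_area unfolding elig S0_def occupied_def by blast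
    then show ?thesis unfolding status_inv_def using status by auto
  qed
  ultimately show ?thesis unfolding dle_inv_def S0_def by simp
qed

lemma dle_inv_terminate:
  assumes inv: "dle_inv P S0 C" and p: "pos C p = Contr v"
  shows "dle_inv P S0 (C\<lparr>terminated := (terminated C)(p := True)\<rparr>)"
  using inv p shape_inv_cong[of "C\<lparr>terminated := (terminated C)(p := True)\<rparr>" C]
  unfolding dle_inv_def status_inv_def by auto

lemma dle_inv_leader:
  assumes inv: "dle_inv P S0 C" and p: "p \<in> P" "pos C p = Contr v" "stat C p = Undecided"
  shows "dle_inv P S0 (C\<lparr>stat := (stat C)(p := Leader)\<rparr>)"
proof -
  have "v \<in> elig C" using inv p unfolding dle_inv_def status_inv_def by force
  then show ?thesis
    using inv p shape_inv_cong[of "C\<lparr>stat := (stat C)(p := Leader)\<rparr>" C]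
    unfolding dle_inv_def status_inv_def by auto
qed

lemma dle_inv_contract:
  assumes inv: "dle_inv P S0 C" and p: "p \<in> P" "pos C p = Exp h t"
  shows "dle_inv P S0 (C\<lparr>pos := (pos C)(p := Contr h)\<rparr>)" (is "dle_inv P S0 ?C'")
proof -
  have t: "t \<notin> elig C" using inv p unfolding dle_inv_def shape_inv_def by blast
  have occ_sub: "occ_pts (pos ?C' q) \<subseteq> occ_pts (pos C q)" for q using p by simp
  then have occ: "occupied P ?C' \<subseteq> occupied P C" unfolding occupied_def by auto
  have "x \<in> occupied P ?C'" if x: "x \<in> occupied P C" "x \<noteq> t" for x
  proof -
    obtain q where q: "q \<in> P" "x \<in> occ_pts (pos C q)" using x(1) unfolding occupied_def by blast
    then have "x \<in> occ_pts (pos ?C' q)" using p x(2) by (cases "q = p") auto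
    then show ?thesis using q(1) unfolding occupied_def by blast
  qed
  then have X: "eligible_occupied P ?C' = eligible_occupied P C"
    using occ t unfolding eligible_occupied_def by auto
  have "(\<lambda>q. head_of (pos ?C' q)) = (\<lambda>q. head_of (pos C q))" using p by auto
  then have H: "heads P ?C' = heads P C" unfolding heads_def by (simp only:)
  have "\<forall>q\<in>P. \<forall>h' t'. pos ?C' q = Exp h' t' \<longrightarrow> t' \<notin> elig ?C'"
    using inv unfolding dle_inv_def shape_inv_def by auto
  moreover have "\<forall>q\<in>P. \<forall>r\<in>P. q \<noteq> r \<longrightarrow> occ_pts (pos ?C' q) \<inter> occ_pts (pos ?C' r) = {}"
    using inv occ_sub unfolding dle_inv_def shape_inv_def by blast
  ultimately have "shape_inv P S0 ?C'"
    using inv occ unfolding dle_inv_def shape_inv_def X H by auto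
  moreover have "stat C p \<noteq> Leader" using inv p unfolding dle_inv_def status_inv_def by force
  then have "status_inv P ?C'" using inv p unfolding dle_inv_def status_inv_def by auto
  ultimately show ?thesis unfolding dle_inv_def ..
qed

lemma eligible_occupied_subset_heads:
  assumes "\<forall>p\<in>P. \<forall>h t. pos C p = Exp h t \<longrightarrow> t \<notin> elig C"
  shows "eligible_occupied P C \<subseteq> heads P C"
proof
  fix x assume "x \<in> eligible_occupied P C"
  then obtain p where p: "p \<in> P" "x \<in> occ_pts (pos C p)" "x \<in> elig C"
    unfolding eligible_occupied_def occupied_def by blast
  then have "x = head_of (pos C p)" using assms by (cases "pos C p") auto
  then show "x \<in> heads P C" unfolding heads_def using p(1) by blast
qed

lemma occ_pts_other_particle:
  assumes "shape_inv P S0 C" "p \<in> P" "q \<in> P" "q \<noteq> p" "x \<in> occ_pts (pos C p)"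
  shows "x \<notin> occ_pts (pos C q)"
  using assms unfolding shape_inv_def by blast

lemma expand_sets:
  assumes inv: "shape_inv P S0 C" and p: "p \<in> P" "pos C p = Contr v" and u: "u \<notin> occupied P C" "u \<in> elig C"
    and C': "pos C' = (pos C)(p := Exp u v)" "elig C' = elig C - {v}"
  shows "occupied P C' = insert u (occupied P C)"
    and "eligible_occupied P C' = insert u (eligible_occupied P C - {v})"
    and "heads P C' = insert u (heads P C - {v})"
proof -
  have v: "v \<notin> occ_pts (pos C q)" if "q \<in> P" "q \<noteq> p" for q
    using occ_pts_other_particle[OF inv p(1) that] p(2) by simp
  have "occupied P C' = occ_pts (Exp u v) \<union> (\<Union>q\<in>P - {p}. occ_pts (pos C q))"
    unfolding occupied_def C' using p(1) by (auto split: if_splits)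
  moreover have "occupied P C = occ_pts (Contr v) \<union> (\<Union>q\<in>P - {p}. occ_pts (pos C q))"
    unfolding occupied_def using p by auto
  ultimately show occ: "occupied P C' = insert u (occupied P C)" by auto
  moreover have "u \<noteq> v" using u(1) p unfolding occupied_def by force
  ultimately show "eligible_occupied P C' = insert u (eligible_occupied P C - {v})"
    unfolding eligible_occupied_def C' using u(2) by auto
  have "heads P C' = insert u ((\<lambda>q. head_of (pos C q)) ` (P - {p}))"
    unfolding heads_def C' using p(1) by auto
  moreover have "heads P C = (\<lambda>q. head_of (pos C q)) ` insert p (P - {p})"
    unfolding heads_def using p(1) by (simp add: insert_absorb)
  then have "heads P C = insert v ((\<lambda>q. head_of (pos C q)) ` (P - {p}))"
    unfolding image_insert p(2) head_of.simps .
  moreover have "v \<notin> (\<lambda>q. head_of (pos C q)) ` (P - {p})"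
    using v head_of_mem_occ_pts by fastforce
  ultimately show "heads P C' = insert u (heads P C - {v})" by auto
qed

lemma shape_inv_expand:
  assumes inv: "shape_inv P S0 C" and p: "p \<in> P" "pos C p = Contr v" and sce: "SCE (elig C) v"
    and u: "gadj v u" "u \<notin> occupied P C" "u \<in> elig C - {v}"
    and C': "pos C' = (pos C)(p := Exp u v)" "elig C' = elig C - {v}"
  shows "shape_inv P S0 C'"
proof -
  let ?X = "eligible_occupied P C"
  from inv have tails: "\<forall>q\<in>P. \<forall>h t. pos C q = Exp h t \<longrightarrow> t \<notin> elig C"
    and disj: "\<forall>q\<in>P. \<forall>r\<in>P. q \<noteq> r \<longrightarrow> occ_pts (pos C q) \<inter> occ_pts (pos C r) = {}"
    and area: "elig C \<subseteq> area S0" "occupied P C \<subseteq> area S0" and conn: "connected_set (elig C)"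
    and enclosed: "\<forall>w. w \<in> elig C \<and> w \<notin> ?X \<longrightarrow> finite (reach (- ?X) w)"
    and gapless: "\<forall>z\<in>elig C. \<forall>i. (\<exists>x\<in>heads P C. hex_dist z x \<le> i) \<and> i \<le> eccentricity S0 z
        \<longrightarrow> (\<exists>x\<in>heads P C. hex_dist z x = i)"
    unfolding shape_inv_def by blast+
  have "u \<in> elig C" using u(3) by simp
  note sets = expand_sets[OF inv p u(2) this C']
  have XS: "?X \<subseteq> elig C" and vX: "v \<in> ?X"
    using SCE_mem[OF sce] p unfolding eligible_occupied_def occupied_def by force+
  have uX: "u \<notin> ?X" using u(2) unfolding eligible_occupied_def by blast
  have v_only_p: "v \<notin> occ_pts (pos C q)" if "q \<in> P" "q \<noteq> p" for q
    using occ_pts_other_particle[OF inv p(1) that] p(2) by simp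
  show ?thesis
    unfolding shape_inv_def sets C'
  proof (intro conjI)
    show "\<forall>q\<in>P. \<forall>h t. ((pos C)(p := Exp u v)) q = Exp h t \<longrightarrow> t \<notin> elig C - {v}"
      using tails by auto
    show "\<forall>q\<in>P. \<forall>r\<in>P. q \<noteq> r \<longrightarrow> occ_pts (((pos C)(p := Exp u v)) q) \<inter> occ_pts (((pos C)(p := Exp u v)) r) = {}"
      using disj v_only_p u(2) unfolding occupied_def by (auto 4 3)
    show "elig C - {v} \<subseteq> area S0" "insert u (occupied P C) \<subseteq> area S0" using area u(3) by auto
    show "connected_set (elig C - {v})"
      by (rule connected_set_remove_redundant[OF conn SCE_redundant[OF sce]])
    show "\<forall>w. w \<in> elig C - {v} \<and> w \<notin> insert u (?X - {v}) \<longrightarrow> finite (reach (- insert u (?X - {v})) w)"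
      using enclosed_after_erosion[OF XS sce enclosed, of "insert u (?X - {v})"] u(1,3) uX by auto
    show "\<forall>z\<in>elig C - {v}. \<forall>i. (\<exists>x\<in>insert u (heads P C - {v}). hex_dist z x \<le> i) \<and> i \<le> eccentricity S0 z
        \<longrightarrow> (\<exists>x\<in>insert u (heads P C - {v}). hex_dist z x = i)"
    proof
      fix z assume z: "z \<in> elig C - {v}"
      then have "\<forall>i. (\<exists>x\<in>heads P C. hex_dist z x \<le> i) \<and> i \<le> eccentricity S0 z
          \<longrightarrow> (\<exists>x\<in>heads P C. hex_dist z x = i)" using gapless by blast
      moreover have "v \<in> heads P C" using p unfolding heads_def by force
      ultimately show "\<forall>i. (\<exists>x\<in>insert u (heads P C - {v}). hex_dist z x \<le> i) \<and> i \<le> eccentricity S0 z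
          \<longrightarrow> (\<exists>x\<in>insert u (heads P C - {v}). hex_dist z x = i)"
        using gapless_heads_expand[OF XS vX _ eligible_occupied_subset_heads[OF tails] sce conn enclosed u(1) _ uX]
          z u(3) by blast
    qed
  qed
qed

lemma status_inv_erode:
  assumes status: "status_inv P C" and shape: "shape_inv P S0 C"
    and p: "p \<in> P" "pos C p = Contr v" "stat C p = Undecided" "\<not> terminated C p"
    and C': "elig C' = elig C - {v}" "terminated C' = terminated C"
      "\<forall>q\<in>P - {p}. pos C' q = pos C q \<and> stat C' q = stat C q"
    and p': "stat C' p = Undecided \<longrightarrow> head_of (pos C' p) \<in> elig C'" "stat C' p \<noteq> Leader"
  shows "status_inv P C'"
proof -
  have not_v: "x \<noteq> v" if "q \<in> P" "q \<noteq> p" "x \<in> occ_pts (pos C q)" for q x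
    using occ_pts_other_particle[OF shape p(1) that(1,2)] p(2) that(3) by auto
  show ?thesis
    unfolding status_inv_def
  proof (intro conjI ballI impI)
    fix q assume q: "q \<in> P"
    show "\<exists>x. pos C' q = Contr x" if "terminated C' q"
      using status q that p(4) C'(2,3) unfolding status_inv_def by (cases "q = p") auto
    show "head_of (pos C' q) \<in> elig C'" if "stat C' q = Undecided"
    proof (cases "q = p")
      case False
      then show ?thesis using status q that C' not_v[OF q False head_of_mem_occ_pts]
        unfolding status_inv_def by auto
    qed (use that p'(1) in simp)
    show "\<exists>x. pos C' q = Contr x \<and> x \<in> elig C'" if "stat C' q = Leader"
    proof -
      have "q \<noteq> p" using that p'(2) by auto
      then show ?thesis using status q that C' not_v[OF q] unfolding status_inv_def by fastforce
    qed
  qed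
qed

lemma dle_inv_expand:
  assumes inv: "dle_inv P S0 C"
    and p: "p \<in> P" "pos C p = Contr v" "stat C p = Undecided" "\<not> terminated C p"
    and sce: "SCE (elig C) v" and u: "gadj v u" "u \<notin> occupied P C" "u \<in> elig C - {v}"
  shows "dle_inv P S0 (C\<lparr>pos := (pos C)(p := Exp u v), elig := elig C - {v}\<rparr>)"
    (is "dle_inv P S0 ?C'")
proof -
  have shape: "shape_inv P S0 C" and status: "status_inv P C" using inv unfolding dle_inv_def by simp_all
  have "shape_inv P S0 ?C'" by (rule shape_inv_expand[OF shape p(1,2) sce u]) simp_all
  moreover have "status_inv P ?C'" by (rule status_inv_erode[OF status shape p]) (use u(3) p(3) in simp_all)
  ultimately show ?thesis unfolding dle_inv_def ..
qed

lemma dle_inv_follower: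
  assumes inv: "dle_inv P S0 C"
    and p: "p \<in> P" "pos C p = Contr v" "stat C p = Undecided" "\<not> terminated C p"
    and sce: "SCE (elig C) v" and blocked: "\<not> (\<exists>u. gadj v u \<and> u \<notin> occupied P C \<and> u \<in> elig C - {v})"
  shows "dle_inv P S0 (C\<lparr>stat := (stat C)(p := Follower), elig := elig C - {v}\<rparr>)"
    (is "dle_inv P S0 ?C'")
proof -
  let ?X = "eligible_occupied P C"
  have X': "eligible_occupied P ?C' = ?X - {v}"
    unfolding eligible_occupied_def occupied_def by auto
  have H': "heads P ?C' = heads P C" unfolding heads_def by simp
  have O': "occupied P ?C' = occupied P C" unfolding occupied_def by simp
  have XS: "?X \<subseteq> elig C" unfolding eligible_occupied_def by blast
  have no_refill: "\<not> (\<exists>u. gadj v u \<and> u \<in> elig C \<and> u \<notin> ?X)"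
    using blocked gadj_irrefl unfolding eligible_occupied_def by blast
  have shape: "shape_inv P S0 C" using inv unfolding dle_inv_def by simp
  then have conn: "connected_set (elig C)"
    and enclosed: "\<forall>w. w \<in> elig C \<and> w \<notin> ?X \<longrightarrow> finite (reach (- ?X) w)"
    unfolding shape_inv_def by blast+
  have "connected_set (elig C - {v})"
    by (rule connected_set_remove_redundant[OF conn SCE_redundant[OF sce]])
  moreover have "\<forall>w. w \<in> elig C - {v} \<and> w \<notin> ?X - {v} \<longrightarrow> finite (reach (- (?X - {v})) w)"
    using enclosed_after_erosion[OF XS sce enclosed, of "?X - {v}"] no_refill by blast
  ultimately have "shape_inv P S0 ?C'"
    using shape unfolding shape_inv_def X' H' O' by auto
  moreover have "status_inv P C" using inv unfolding dle_inv_def by simp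
  then have "status_inv P ?C'" by (rule status_inv_erode[OF _ shape p]) simp_all
  ultimately show ?thesis unfolding dle_inv_def ..
qed

lemma dle_inv_step:
  assumes inv: "dle_inv P S0 C" and p: "p \<in> P" and step: "dle_step P p C C'"
  shows "dle_inv P S0 C'"
  using step
proof cases
  case (contract h t) then show ?thesis using dle_inv_contract[OF inv p] by simp
next
  case (terminate v) then show ?thesis using dle_inv_terminate[OF inv] by simp
next
  case (become_leader v) then show ?thesis using dle_inv_leader[OF inv p] by simp
next
  case (erode_expand v u) then show ?thesis using dle_inv_expand[OF inv p] by simp
next
  case (erode_follower v) then show ?thesis using dle_inv_follower[OF inv p] by simp
qed (use inv in simp_all)

lemma dle_inv_execution:
  assumes "permitted_init P (C 0)" "fair_execution P C act"
  shows "dle_inv P (occupied P (C 0)) (C n)"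
proof (induction n)
  case 0 show ?case by (rule dle_inv_init[OF assms(1)])
next
  case (Suc n)
  have "act n \<in> P" "dle_step P (act n) (C n) (C (Suc n))"
    using assms(2) unfolding fair_execution_def by simp_all
  then show ?case using dle_inv_step[OF Suc.IH] by blast
qed

theorem lemma4p10:
  fixes P :: "'p set" and C :: "nat \<Rightarrow> 'p conf" and act :: "nat \<Rightarrow> 'p"
    and t :: nat and ld :: 'p and l :: point
  assumes "permitted_init P (C 0)"
    and "fair_execution P C act"
    and "\<forall>p\<in>P. terminated (C t) p"
    and "ld \<in> P" and "stat (C t) ld = Leader" and "pos (C t) ld = Contr l"
  shows "(\<forall>i \<le> eccentricity (occupied P (C 0)) l.
            \<exists>q\<in>P. \<exists>w. pos (C t) q = Contr w \<and> gdist l w = i)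
       \<and> (\<forall>q\<in>P. \<forall>w \<in> occ_pts (pos (C t) q). gdist l w \<le> eccentricity (occupied P (C 0)) l)"
proof -
  define S0 where "S0 = occupied P (C 0)"
  have inv: "shape_inv P S0 (C t)" "status_inv P (C t)"
    using dle_inv_execution[OF assms(1,2)] unfolding S0_def dle_inv_def by simp_all
  have "l \<in> elig (C t)" using inv(2) assms(4-6) unfolding status_inv_def by force
  moreover have "l \<in> heads P (C t)" using assms(4,6) unfolding heads_def by force
  ultimately have dists: "\<exists>x\<in>heads P (C t). hex_dist l x = i" if "i \<le> eccentricity S0 l" for i
    using inv(1) that unfolding shape_inv_def by (metis hex_dist_self le0)
  have contracted: "\<exists>w. pos (C t) q = Contr w" if "q \<in> P" for q
    using inv(2) assms(3) that unfolding status_inv_def by blast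
  have "\<exists>q\<in>P. \<exists>w. pos (C t) q = Contr w \<and> gdist l w = i" if "i \<le> eccentricity S0 l" for i
    using dists[OF that] contracted unfolding heads_def gdist_eq_hex_dist by force
  moreover have "gdist l w \<le> eccentricity S0 l" if "q \<in> P" "w \<in> occ_pts (pos (C t) q)" for q w
  proof (rule gdist_le_eccentricity_area)
    show "finite S0" using assms(1) unfolding permitted_init_def connected_shape_def S0_def by simp
    show "w \<in> area S0" using inv(1) that unfolding shape_inv_def occupied_def by blast
  qed
  ultimately show ?thesis unfolding S0_def by blast
qed

end
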